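(* Let $(X_n)$ be generated by the $\lambda$-SAGA algorithm (defined in the context) with fixed $\lambda\in[0,1]$ and a positive deterministic step sequence $(\gamma_n)$ decreasing to $0$ with $\sum\gamma_n=+\infty$ and $\sum\gamma_n^2<+\infty$. Assume (A1) $f$ is continuously differentiable with a unique $x^*$ such that $\nabla f(x^* )=0$; (A3) there is $L>0$ with $\tau^2(x)\le L\|x-x^*\|^2$ for all $x$; (A5) there is $\mu>0$ with $\langle x-x^*,\nabla f(x)\rangle\ge\mu\|x-x^*\|^2$ for all $x$. Then almost surely $$\sum_{n\ge1}\gamma_nV_n<\infty,\qquad\sum_{n\ge1}\gamma_nA_n<\infty,\qquad\sum_{n\ge1}\gamma_n\tau^2(X_n)<\infty,$$ and moreover $$\sum_{n\ge1}\gamma_n\mathbb E[V_n]<\infty,\qquad\sum_{n\ge1}\gamma_n\mathbb E[A_n]<\infty,\qquad\sum_{n\ge1}\gamma_n\mathbb E[\tau^2(X_n)]<\infty.$$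
   Context: Let $N,d\ge1$ be integers, $f_1,\dots,f_N:\mathbb R^d\to\mathbb R$ differentiable, and $f=\frac1N\sum_{k=1}^N f_k$. The $\lambda$-SAGA algorithm with parameter $\lambda\in[0,1]$ and positive deterministic steps $(\gamma_n)_{n\ge1}$: let $X_0,X_1$ be square-integrable random vectors in $\mathbb R^d$ and $(U_n)_{n\ge2}$ i.i.d. uniform on $\{1,\dots,N\}$, independent of $(X_0,X_1)$. Set $g_{1,k}=\nabla f_k(X_0)$ for $k=1,\dots,N$ and for $n\ge1$: $X_{n+1}=X_n-\gamma_n\Big(\nabla f_{U_{n+1}}(X_n)-\lambda\big(g_{n,U_{n+1}}-\frac1N\sum_{k=1}^N g_{n,k}\big)\Big)$, and $g_{n+1,k}=\nabla f_k(X_n)$ if $U_{n+1}=k$, $g_{n+1,k}=g_{n,k}$ otherwise. Define $\phi_{n,k}$ by $\phi_{1,k}=X_0$, $\phi_{n+1,k}=X_n$ if $U_{n+1}=k$ and $\phi_{n+1,k}=\phi_{n,k}$ otherwise (so $g_{n,k}=\nabla f_k(\phi_{n,k})$). Notation: $V_n=\|X_n-x^*\|^2$, $\tau^2(x)=\frac1N\sum_{k=1}^N\|\nabla f_k(x)-\nabla f_k(x^* )\|^2$, $A_n=\frac1N\sum_{k=1}^N\|\nabla f_k(\phi_{n,k})-\nabla f_k(x^* )\|^2$. *)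

theory Defs
  imports "HOL-Probability.Probability"
begin

text \<open>State of the lambda-SAGA recursion.  saga_state g N lam gam x0 x1 u m = (X_(m+1), phi_(m+1))
  where phi_n k is the point at which the stored gradient g_(n,k) was evaluated,
  g k is the gradient of f_k, u n is the index U_n and gam n is the step gamma_n.\<close>
fun saga_state :: "(nat \<Rightarrow> 'a::euclidean_space \<Rightarrow> 'a) \<Rightarrow> nat \<Rightarrow> real \<Rightarrow> (nat \<Rightarrow> real)
      \<Rightarrow> 'a \<Rightarrow> 'a \<Rightarrow> (nat \<Rightarrow> nat) \<Rightarrow> nat \<Rightarrow> 'a \<times> (nat \<Rightarrow> 'a)" where
  "saga_state g N lam gam x0 x1 u 0 = (x1, (\<lambda>k. x0))"
| "saga_state g N lam gam x0 x1 u (Suc n) =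
     (let (x, phi) = saga_state g N lam gam x0 x1 u n; j = u (n + 2) in
       (x - gam (n + 1) *\<^sub>R (g j x - lam *\<^sub>R (g j (phi j) - (1 / real N) *\<^sub>R (\<Sum>k=1..N. g k (phi k)))),
        phi(j := x)))"

definition saga_X :: "(nat \<Rightarrow> 'a::euclidean_space \<Rightarrow> 'a) \<Rightarrow> nat \<Rightarrow> real \<Rightarrow> (nat \<Rightarrow> real)
      \<Rightarrow> 'a \<Rightarrow> 'a \<Rightarrow> (nat \<Rightarrow> nat) \<Rightarrow> nat \<Rightarrow> 'a" where
  "saga_X g N lam gam x0 x1 u n = fst (saga_state g N lam gam x0 x1 u (n - 1))"

definition saga_phi :: "(nat \<Rightarrow> 'a::euclidean_space \<Rightarrow> 'a) \<Rightarrow> nat \<Rightarrow> real \<Rightarrow> (nat \<Rightarrow> real)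
      \<Rightarrow> 'a \<Rightarrow> 'a \<Rightarrow> (nat \<Rightarrow> nat) \<Rightarrow> nat \<Rightarrow> nat \<Rightarrow> 'a" where
  "saga_phi g N lam gam x0 x1 u n = snd (saga_state g N lam gam x0 x1 u (n - 1))"

definition tau2 :: "(nat \<Rightarrow> 'a::euclidean_space \<Rightarrow> 'a) \<Rightarrow> nat \<Rightarrow> 'a \<Rightarrow> 'a \<Rightarrow> real" where
  "tau2 g N xs x = (1 / real N) * (\<Sum>k=1..N. (norm (g k x - g k xs))\<^sup>2)"

definition saga_A :: "(nat \<Rightarrow> 'a::euclidean_space \<Rightarrow> 'a) \<Rightarrow> nat \<Rightarrow> 'a \<Rightarrow> (nat \<Rightarrow> 'a) \<Rightarrow> real" where
  "saga_A g N xs phi = (1 / real N) * (\<Sum>k=1..N. (norm (g k (phi k) - g k xs))\<^sup>2)"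

end

theory Submission
  imports Defs
begin

text \<open>Given \<open>X\<^sub>0 = x0\<close> and \<open>X\<^sub>1 = x1\<close>, the state \<open>(X\<^sub>n\<^sub>+\<^sub>1, \<phi>\<^sub>n\<^sub>+\<^sub>1)\<close> is a function of
  \<open>U\<^sub>2, \<dots>, U\<^sub>n\<^sub>+\<^sub>1\<close>, which are uniform and independent of the initial points, so its
  expectations are averages over the \<open>N\<^sup>n\<close> index paths. For these averages \<open>e\<^sub>n\<close> of \<open>V\<close>
  and \<open>a\<^sub>n\<close> of \<open>A\<close>, one step gives \<open>e\<^sub>n\<^sub>+\<^sub>1 \<le> (1 - 2\<mu>\<gamma> + 3L\<gamma>\<^sup>2) e\<^sub>n + 3\<gamma>\<^sup>2 a\<^sub>n + 3\<gamma>\<^sup>2 \<sigma>\<close>,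
  with \<open>\<sigma>\<close> the mean of \<open>\<parallel>\<nabla>f\<^sub>k(x\<^sup>*)\<parallel>\<^sup>2\<close> (strong monotonicity, the mean-square Lipschitz bound and unbiasedness of the SAGA direction)
  and \<open>a\<^sub>n\<^sub>+\<^sub>1 \<le> (1 - 1/N) a\<^sub>n + (L/N) e\<^sub>n\<close> (one stored gradient is refreshed per step).
  Once \<open>\<gamma>\<^sub>n \<le> \<mu>/(6L)\<close>, \<open>e\<^sub>n + (\<mu>N/L) \<gamma>\<^sub>n a\<^sub>n\<close> decreases by \<open>(\<mu>/2) \<gamma>\<^sub>n e\<^sub>n\<close> up to the summable
  error \<open>3\<sigma>\<gamma>\<^sub>n\<^sup>2\<close>, so \<open>\<Sum> \<gamma>\<^sub>n e\<^sub>n\<close> and \<open>\<Sum> \<gamma>\<^sub>n a\<^sub>n\<close> are bounded by a constant times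
  \<open>V\<^sub>1 + A\<^sub>1 + 1\<close>, uniformly in \<open>(x0, x1)\<close>; \<open>\<tau>\<^sup>2 \<le> L V\<close> handles the third series.
  Integrating over the square-integrable initial points bounds the expected series, and a
  nonnegative series with finite expectation converges almost surely.\<close>

lemma gradient_borel_measurable:
  fixes F :: "'a::euclidean_space \<Rightarrow> real" and G :: "'a \<Rightarrow> 'a"
  assumes deriv: "\<And>x. (F has_derivative (\<lambda>h. G x \<bullet> h)) (at x)"
  shows "G \<in> borel_measurable borel"
proof -
  have cont: "continuous_on UNIV F"
    using deriv has_derivative_continuous continuous_at_imp_continuous_on by blast
  show ?thesis
  proof (subst borel_measurable_euclidean_space, intro ballI)
    fix i :: 'a assume i: "i \<in> Basis"
    define Q where "Q m x = (F (x + inverse (real (Suc m)) *\<^sub>R i) - F x) / inverse (real (Suc m))" for m x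
    show "(\<lambda>x. G x \<bullet> i) \<in> borel_measurable borel"
    proof (rule borel_measurable_LIMSEQ_real[where u=Q])
      fix x
      have line: "((\<lambda>t. x + t *\<^sub>R i) has_derivative (\<lambda>t. t *\<^sub>R i)) (at (0::real))"
        by (auto intro!: derivative_eq_intros)
      have "((\<lambda>t. F (x + t *\<^sub>R i)) has_derivative (\<lambda>t. G x \<bullet> (t *\<^sub>R i))) (at (0::real))"
        using has_derivative_compose[OF line, of F "\<lambda>h. G x \<bullet> h"] deriv[of x] by simp
      moreover have "(\<lambda>t. G x \<bullet> (t *\<^sub>R i)) = (*) (G x \<bullet> i)"
        by (auto simp: fun_eq_iff)
      ultimately have "((\<lambda>t. F (x + t *\<^sub>R i)) has_field_derivative (G x \<bullet> i)) (at (0::real))"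
        unfolding has_field_derivative_def by simp
      then have "((\<lambda>t. (F (x + t *\<^sub>R i) - F x) / t) \<longlongrightarrow> G x \<bullet> i) (at 0)"
        unfolding has_field_derivative_iff by simp
      with LIMSEQ_inverse_real_of_nat show "(\<lambda>m. Q m x) \<longlonglongrightarrow> G x \<bullet> i"
        unfolding tendsto_at_iff_sequentially Q_def by (auto simp: o_def)
    next
      fix m
      have "continuous_on UNIV (Q m)" unfolding Q_def
        by (intro continuous_intros continuous_on_compose2[OF cont]) auto
      then show "Q m \<in> borel_measurable borel"
        using borel_measurable_continuous_onI by blast
    qed
  qed
qed

lemma norm_add3_power2_le:
  fixes u v w :: "'a::real_normed_vector"
  shows "(norm (u + v + w))\<^sup>2 \<le> 3 * (norm u)\<^sup>2 + 3 * (norm v)\<^sup>2 + 3 * (norm w)\<^sup>2"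
proof -
  have "norm (u + v + w) \<le> norm u + norm v + norm w"
    by (meson add_mono_thms_linordered_semiring(3) norm_triangle_ineq order_trans)
  then have "(norm (u + v + w))\<^sup>2 \<le> (norm u + norm v + norm w)\<^sup>2"
    by (simp add: power_mono)
  also have "\<dots> \<le> 3 * (norm u)\<^sup>2 + 3 * (norm v)\<^sup>2 + 3 * (norm w)\<^sup>2"
    by (smt (verit, best) sum_squares_ge_zero power2_diff power2_sum mult_2 zero_le_power2
          power2_eq_square)
  finally show ?thesis .
qed

lemma sum_norm_diff_mean_power2_le:
  fixes b :: "nat \<Rightarrow> 'a::real_inner"
  assumes N: "N \<ge> 1" and m: "m = (1 / real N) *\<^sub>R (\<Sum>k=1..N. b k)"
  shows "(\<Sum>j=1..N. (norm (b j - m))\<^sup>2) \<le> (\<Sum>j=1..N. (norm (b j))\<^sup>2)"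
proof -
  have sum_b: "(\<Sum>k=1..N. b k) = real N *\<^sub>R m" using N by (simp add: m)
  have "(\<Sum>j=1..N. (norm (b j - m))\<^sup>2) = (\<Sum>j=1..N. (norm (b j))\<^sup>2 - 2 * (b j \<bullet> m) + (norm m)\<^sup>2)"
    by (intro sum.cong refl)
      (simp add: power2_norm_eq_inner inner_diff_left inner_diff_right inner_commute)
  also have "\<dots> = (\<Sum>j=1..N. (norm (b j))\<^sup>2) - 2 * ((\<Sum>k=1..N. b k) \<bullet> m) + real N * (norm m)\<^sup>2"
    by (simp add: sum.distrib sum_subtractf inner_sum_left sum_distrib_left)
  also have "\<dots> = (\<Sum>j=1..N. (norm (b j))\<^sup>2) - real N * (norm m)\<^sup>2"
    using sum_b by (simp add: power2_norm_eq_inner)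
  finally show ?thesis by simp
qed

lemma norm_diff_power2_le:
  fixes a b :: "'a::real_normed_vector"
  shows "(norm (a - b))\<^sup>2 \<le> 2 * (norm a)\<^sup>2 + 2 * (norm b)\<^sup>2"
proof -
  have "(norm (a - b))\<^sup>2 \<le> (norm a + norm b)\<^sup>2"
    using norm_triangle_ineq4[of a b] by (simp add: power_mono)
  also have "\<dots> \<le> 2 * (norm a)\<^sup>2 + 2 * (norm b)\<^sup>2"
    using zero_le_power2[of "norm a - norm b"] by (simp add: power2_sum power2_diff)
  finally show ?thesis .
qed

lemma saga_A_nonneg: "saga_A g N xs phi \<ge> 0"
  unfolding saga_A_def by (intro mult_nonneg_nonneg sum_nonneg) auto

lemma tau2_nonneg: "tau2 g N xs x \<ge> 0"
  unfolding tau2_def by (intro mult_nonneg_nonneg sum_nonneg) auto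

lemma tau2_measurable:
  assumes g: "\<And>k. k \<in> {1..N} \<Longrightarrow> g k \<in> borel_measurable borel" and f: "f \<in> borel_measurable K"
  shows "(\<lambda>\<omega>. tau2 g N xs (f \<omega>)) \<in> borel_measurable K"
  unfolding tau2_def using measurable_compose[OF f g]
  by (intro borel_measurable_times borel_measurable_sum borel_measurable_power
      measurable_compose[OF _ borel_measurable_norm] borel_measurable_diff) (auto simp: o_def)

lemma saga_A_measurable:
  assumes g: "\<And>k. k \<in> {1..N} \<Longrightarrow> g k \<in> borel_measurable borel"
    and phi: "\<And>k. (\<lambda>\<omega>. phi \<omega> k) \<in> borel_measurable K"
  shows "(\<lambda>\<omega>. saga_A g N xs (phi \<omega>)) \<in> borel_measurable K"
  unfolding saga_A_def using measurable_compose[OF phi g]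
  by (intro borel_measurable_times borel_measurable_sum borel_measurable_power
      measurable_compose[OF _ borel_measurable_norm] borel_measurable_diff) (auto simp: o_def)

section \<open>One step of \<open>\<lambda>\<close>-SAGA\<close>

definition saga_direction :: "(nat \<Rightarrow> 'a::euclidean_space \<Rightarrow> 'a) \<Rightarrow> nat \<Rightarrow> real
    \<Rightarrow> 'a \<Rightarrow> (nat \<Rightarrow> 'a) \<Rightarrow> nat \<Rightarrow> 'a" where
  "saga_direction g N lam x phi j =
     g j x - lam *\<^sub>R (g j (phi j) - (1 / real N) *\<^sub>R (\<Sum>k=1..N. g k (phi k)))"

fun saga_step :: "(nat \<Rightarrow> 'a::euclidean_space \<Rightarrow> 'a) \<Rightarrow> nat \<Rightarrow> real \<Rightarrow> real
    \<Rightarrow> 'a \<times> (nat \<Rightarrow> 'a) \<Rightarrow> nat \<Rightarrow> 'a \<times> (nat \<Rightarrow> 'a)" where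
  "saga_step g N lam \<gamma> (x, phi) j = (x - \<gamma> *\<^sub>R saga_direction g N lam x phi j, phi(j := x))"

lemma saga_state_Suc_step:
  "saga_state g N lam gam x0 x1 u (Suc n) =
     saga_step g N lam (gam (n + 1)) (saga_state g N lam gam x0 x1 u n) (u (n + 2))"
  by (cases "saga_state g N lam gam x0 x1 u n") (simp add: saga_direction_def Let_def)

lemma saga_state_cong:
  "(\<And>m. m \<in> {2..n+1} \<Longrightarrow> u m = w m) \<Longrightarrow>
     saga_state g N lam gam x0 x1 u n = saga_state g N lam gam x0 x1 w n"
  by (induction n) (simp_all only: saga_state_Suc_step, auto)

lemma sum_saga_direction:
  assumes N: "N \<ge> 1"
  shows "(\<Sum>j=1..N. saga_direction g N lam x phi j) = (\<Sum>j=1..N. g j x)"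
proof -
  define m where "m = (1 / real N) *\<^sub>R (\<Sum>k=1..N. g k (phi k))"
  have dir: "saga_direction g N lam x phi j = g j x - lam *\<^sub>R (g j (phi j) - m)" for j
    by (simp add: saga_direction_def m_def)
  have "(\<Sum>j=1..N. g j (phi j) - m) = 0"
    using N by (simp add: m_def sum_subtractf sum_constant_scaleR)
  then show ?thesis
    by (simp add: dir sum_subtractf scaleR_sum_right[symmetric])
qed

lemma sum_norm_saga_direction_le:
  fixes g :: "nat \<Rightarrow> 'a::euclidean_space \<Rightarrow> 'a"
  assumes N: "N \<ge> 1" and lam: "0 \<le> lam" "lam \<le> 1" and xs: "(\<Sum>k=1..N. g k xs) = 0"
  shows "(\<Sum>j=1..N. (norm (saga_direction g N lam x phi j))\<^sup>2)
     \<le> 3 * real N * tau2 g N xs x + 3 * (\<Sum>k=1..N. (norm (g k xs))\<^sup>2)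
       + 3 * real N * saga_A g N xs phi"
proof -
  define b where "b j = g j (phi j) - g j xs" for j
  define m where "m = (1 / real N) *\<^sub>R (\<Sum>k=1..N. b k)"
  have dir: "saga_direction g N lam x phi j
      = (g j x - g j xs) + (1 - lam) *\<^sub>R g j xs + (- lam) *\<^sub>R (b j - m)" for j
    using xs by (simp add: saga_direction_def m_def b_def sum_subtractf algebra_simps)
  have "(norm (saga_direction g N lam x phi j))\<^sup>2
      \<le> 3 * (norm (g j x - g j xs))\<^sup>2 + 3 * (norm (g j xs))\<^sup>2 + 3 * (norm (b j - m))\<^sup>2" for j
  proof -
    have "\<bar>1 - lam\<bar> \<le> 1" "\<bar>- lam\<bar> \<le> 1" using lam by auto
    then have "(norm ((1 - lam) *\<^sub>R g j xs))\<^sup>2 \<le> (norm (g j xs))\<^sup>2"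
      "(norm ((- lam) *\<^sub>R (b j - m)))\<^sup>2 \<le> (norm (b j - m))\<^sup>2"
      by (simp_all add: power_mult_distrib mult_left_le_one_le power_le_one abs_le_square_iff)
    then show ?thesis using norm_add3_power2_le[of "g j x - g j xs"] dir by smt
  qed
  then have "(\<Sum>j=1..N. (norm (saga_direction g N lam x phi j))\<^sup>2)
      \<le> (\<Sum>j=1..N. 3 * (norm (g j x - g j xs))\<^sup>2 + 3 * (norm (g j xs))\<^sup>2 + 3 * (norm (b j - m))\<^sup>2)"
    by (rule sum_mono)
  also have "\<dots> = 3 * (\<Sum>j=1..N. (norm (g j x - g j xs))\<^sup>2) + 3 * (\<Sum>j=1..N. (norm (g j xs))\<^sup>2)
        + 3 * (\<Sum>j=1..N. (norm (b j - m))\<^sup>2)"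
    by (simp add: sum.distrib sum_distrib_left)
  also have "\<dots> \<le> 3 * real N * tau2 g N xs x + 3 * (\<Sum>k=1..N. (norm (g k xs))\<^sup>2)
       + 3 * real N * saga_A g N xs phi"
  proof -
    have "(\<Sum>j=1..N. (norm (b j - m))\<^sup>2) \<le> (\<Sum>j=1..N. (norm (b j))\<^sup>2)"
      by (rule sum_norm_diff_mean_power2_le[OF N m_def])
    moreover have "(\<Sum>j=1..N. (norm (g j x - g j xs))\<^sup>2) = real N * tau2 g N xs x"
      "(\<Sum>j=1..N. (norm (b j))\<^sup>2) = real N * saga_A g N xs phi"
      using N by (simp_all add: tau2_def saga_A_def b_def)
    ultimately show ?thesis by linarith
  qed
  finally show ?thesis .
qed

lemma saga_step_mean_dist_le:
  fixes g :: "nat \<Rightarrow> 'a::euclidean_space \<Rightarrow> 'a"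
  assumes N: "N \<ge> 1" and lam: "0 \<le> lam" "lam \<le> 1" and \<gamma>: "\<gamma> \<ge> 0"
    and xs: "(\<Sum>k=1..N. g k xs) = 0"
    and A3: "tau2 g N xs x \<le> L * (norm (x - xs))\<^sup>2"
    and A5: "(x - xs) \<bullet> ((1 / real N) *\<^sub>R (\<Sum>k=1..N. g k x)) \<ge> \<mu> * (norm (x - xs))\<^sup>2"
  shows "(1 / real N) * (\<Sum>j=1..N. (norm (fst (saga_step g N lam \<gamma> (x, phi) j) - xs))\<^sup>2)
     \<le> (1 - 2 * \<mu> * \<gamma> + 3 * L * \<gamma>\<^sup>2) * (norm (x - xs))\<^sup>2 + 3 * \<gamma>\<^sup>2 * saga_A g N xs phi
        + 3 * \<gamma>\<^sup>2 * ((1 / real N) * (\<Sum>k=1..N. (norm (g k xs))\<^sup>2))"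
proof -
  define d where "d = x - xs"
  define H where "H = saga_direction g N lam x phi"
  define S where "S = (\<Sum>k=1..N. (norm (g k xs))\<^sup>2)"
  have Npos: "real N > 0" using N by simp
  have "(norm (x - \<gamma> *\<^sub>R H j - xs))\<^sup>2 = (norm d)\<^sup>2 - 2 * \<gamma> * (d \<bullet> H j) + \<gamma>\<^sup>2 * (norm (H j))\<^sup>2" for j
  proof -
    have "x - \<gamma> *\<^sub>R H j - xs = d - \<gamma> *\<^sub>R H j" by (simp add: d_def algebra_simps)
    then show ?thesis
      unfolding power2_norm_eq_inner
      by (simp add: inner_commute power2_eq_square algebra_simps)
  qed
  then have "(\<Sum>j=1..N. (norm (fst (saga_step g N lam \<gamma> (x, phi) j) - xs))\<^sup>2)
      = real N * (norm d)\<^sup>2 - 2 * \<gamma> * (d \<bullet> (\<Sum>j=1..N. H j)) + \<gamma>\<^sup>2 * (\<Sum>j=1..N. (norm (H j))\<^sup>2)"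
    by (simp add: H_def sum.distrib sum_subtractf sum_distrib_left inner_sum_right)
  also have "\<dots> \<le> real N * (norm d)\<^sup>2 - 2 * \<gamma> * (real N * \<mu> * (norm d)\<^sup>2)
      + \<gamma>\<^sup>2 * (3 * real N * (L * (norm d)\<^sup>2) + 3 * S + 3 * real N * saga_A g N xs phi)"
  proof -
    have "d \<bullet> (\<Sum>j=1..N. H j) = real N * (d \<bullet> ((1 / real N) *\<^sub>R (\<Sum>k=1..N. g k x)))"
      unfolding H_def sum_saga_direction[OF N] using Npos by simp
    then have "real N * \<mu> * (norm d)\<^sup>2 \<le> d \<bullet> (\<Sum>j=1..N. H j)"
      using A5 Npos unfolding d_def by (simp add: pos_le_divide_eq mult_ac)
    moreover have "(\<Sum>j=1..N. (norm (H j))\<^sup>2)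
        \<le> 3 * real N * (L * (norm d)\<^sup>2) + 3 * S + 3 * real N * saga_A g N xs phi"
      using sum_norm_saga_direction_le[where g=g and xs=xs and x=x and phi=phi, OF N lam xs] A3 Npos
      unfolding H_def S_def d_def by (smt (verit) mult_left_mono)
    ultimately show ?thesis
      using \<gamma> by (smt (verit) mult_left_mono zero_le_power2)
  qed
  also have "\<dots> = real N * ((1 - 2 * \<mu> * \<gamma> + 3 * L * \<gamma>\<^sup>2) * (norm (x - xs))\<^sup>2
      + 3 * \<gamma>\<^sup>2 * saga_A g N xs phi + 3 * \<gamma>\<^sup>2 * ((1 / real N) * S))"
    using Npos by (simp add: d_def algebra_simps)
  finally show ?thesis
    using Npos unfolding S_def by (simp add: divide_simps mult.commute)
qed

lemma saga_step_mean_A_eq: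
  assumes N: "N \<ge> 1"
  shows "(1 / real N) * (\<Sum>j=1..N. saga_A g N xs (snd (saga_step g N lam \<gamma> (x, phi) j)))
       = (1 - 1 / real N) * saga_A g N xs phi + (1 / real N) * tau2 g N xs x"
proof -
  define c where "c k = (norm (g k (phi k) - g k xs))\<^sup>2" for k
  define t where "t k = (norm (g k x - g k xs))\<^sup>2" for k
  have replace: "(\<Sum>k=1..N. (norm (g k ((phi(j := x)) k) - g k xs))\<^sup>2) = (\<Sum>k=1..N. c k) - c j + t j"
    if j: "j \<in> {1..N}" for j
  proof -
    have "(\<Sum>k=1..N. (norm (g k ((phi(j := x)) k) - g k xs))\<^sup>2)
        = (\<Sum>k=1..N. c k + (if k = j then t j - c j else 0))"
      by (intro sum.cong) (auto simp: c_def t_def)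
    then show ?thesis using j by (simp add: sum.distrib)
  qed
  have "(\<Sum>j=1..N. saga_A g N xs (snd (saga_step g N lam \<gamma> (x, phi) j)))
      = (\<Sum>j=1..N. (1 / real N) * ((\<Sum>k=1..N. c k) - c j + t j))"
    by (intro sum.cong refl) (use replace in \<open>simp add: saga_A_def del: fun_upd_apply\<close>)
  also have "\<dots> = (1 / real N) * (\<Sum>j=1..N. (\<Sum>k=1..N. c k) - c j + t j)"
    by (simp only: sum_distrib_left)
  also have "\<dots> = (1 / real N) * (real N * (\<Sum>k=1..N. c k) - (\<Sum>k=1..N. c k) + (\<Sum>k=1..N. t k))"
    by (simp add: sum.distrib sum_subtractf)
  finally show ?thesis using N
    by (simp add: saga_A_def tau2_def c_def t_def field_simps)
qed

section \<open>Averages over index paths\<close>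

text \<open>The possible values of the indices \<open>U\<^sub>2, \<dots>, U\<^sub>n\<^sub>+\<^sub>1\<close>, as extensional functions.\<close>

definition index_paths :: "nat \<Rightarrow> nat \<Rightarrow> (nat \<Rightarrow> nat) set" where
  "index_paths N n = Pi\<^sub>E {2..n+1} (\<lambda>_. {1..N})"

definition path_mean :: "nat \<Rightarrow> nat \<Rightarrow> ((nat \<Rightarrow> nat) \<Rightarrow> real) \<Rightarrow> real" where
  "path_mean N n F = (\<Sum>v\<in>index_paths N n. F v) / real N ^ n"

lemma finite_index_paths: "finite (index_paths N n)"
  unfolding index_paths_def by (simp add: finite_PiE)

lemma card_index_paths: "card (index_paths N n) = N ^ n"
  unfolding index_paths_def by (simp add: card_PiE)

lemma sum_index_paths_Suc:
  "(\<Sum>v\<in>index_paths N (Suc n). F v) = (\<Sum>v\<in>index_paths N n. \<Sum>j=1..N. F (v(n+2 := j)))"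
proof -
  have ins: "{2..Suc n + 1} = insert (n+2) {2..n+1}" by auto
  have new: "n + 2 \<notin> {2..n+1}" by simp
  have "(\<Sum>v\<in>index_paths N (Suc n). F v)
      = (\<Sum>v\<in>(\<lambda>(j, w). w(n+2 := j)) ` ({1..N} \<times> index_paths N n). F v)"
    unfolding index_paths_def ins PiE_insert_eq by simp
  also have "\<dots> = (\<Sum>(j, w)\<in>{1..N} \<times> index_paths N n. F (w(n+2 := j)))"
    using inj_combinator[OF new, of "\<lambda>_. {1..N}"]
    by (subst sum.reindex) (simp_all add: index_paths_def case_prod_unfold)
  also have "\<dots> = (\<Sum>v\<in>index_paths N n. \<Sum>j=1..N. F (v(n+2 := j)))"
    by (simp only: sum.cartesian_product[symmetric]) (rule sum.swap)
  finally show ?thesis .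
qed

lemma path_mean_0: "path_mean N 0 F = F (\<lambda>_. undefined)"
  by (simp add: path_mean_def index_paths_def)

lemma path_mean_Suc:
  "path_mean N (Suc n) F = path_mean N n (\<lambda>v. (1 / real N) * (\<Sum>j=1..N. F (v(n+2 := j))))"
  by (simp add: path_mean_def sum_index_paths_Suc sum_divide_distrib[symmetric] mult.commute)

lemma path_mean_mono:
  "(\<And>v. v \<in> index_paths N n \<Longrightarrow> F v \<le> G v) \<Longrightarrow> path_mean N n F \<le> path_mean N n G"
  unfolding path_mean_def by (intro divide_right_mono sum_mono) auto

lemma path_mean_nonneg: "(\<And>v. F v \<ge> 0) \<Longrightarrow> path_mean N n F \<ge> 0"
  unfolding path_mean_def by (intro divide_nonneg_nonneg sum_nonneg) auto

lemma path_mean_affine: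
  assumes "N \<ge> 1"
  shows "path_mean N n (\<lambda>v. a * F v + b * G v + c) = a * path_mean N n F + b * path_mean N n G + c"
  using assms
  by (simp add: path_mean_def sum.distrib sum_distrib_left[symmetric] card_index_paths add_divide_distrib)

text \<open>\<open>saga_mean \<dots> Q x0 x1 n\<close> is the expectation of \<open>Q (X\<^sub>n\<^sub>+\<^sub>1, \<phi>\<^sub>n\<^sub>+\<^sub>1)\<close> given
  \<open>X\<^sub>0 = x0\<close> and \<open>X\<^sub>1 = x1\<close>.\<close>

definition saga_mean :: "(nat \<Rightarrow> 'a::euclidean_space \<Rightarrow> 'a) \<Rightarrow> nat \<Rightarrow> real \<Rightarrow> (nat \<Rightarrow> real)
    \<Rightarrow> ('a \<times> (nat \<Rightarrow> 'a) \<Rightarrow> real) \<Rightarrow> 'a \<Rightarrow> 'a \<Rightarrow> nat \<Rightarrow> real" where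
  "saga_mean g N lam gam Q x0 x1 n = path_mean N n (\<lambda>v. Q (saga_state g N lam gam x0 x1 v n))"

lemma saga_mean_0: "saga_mean g N lam gam Q x0 x1 0 = Q (x1, \<lambda>_. x0)"
  by (simp add: saga_mean_def path_mean_0)

lemma saga_mean_Suc:
  "saga_mean g N lam gam Q x0 x1 (Suc n) = path_mean N n (\<lambda>v. (1 / real N) *
     (\<Sum>j=1..N. Q (saga_step g N lam (gam (n + 1)) (saga_state g N lam gam x0 x1 v n) j)))"
proof -
  have "saga_state g N lam gam x0 x1 (v(n+2 := j)) (Suc n)
      = saga_step g N lam (gam (n + 1)) (saga_state g N lam gam x0 x1 v n) j" for v j
  proof -
    have "saga_state g N lam gam x0 x1 (v(n+2 := j)) n = saga_state g N lam gam x0 x1 v n"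
      by (rule saga_state_cong) simp
    then show ?thesis by (simp only: saga_state_Suc_step fun_upd_same)
  qed
  then show ?thesis by (simp add: saga_mean_def path_mean_Suc)
qed

lemma saga_mean_dist_le:
  fixes g :: "nat \<Rightarrow> 'a::euclidean_space \<Rightarrow> 'a"
  assumes N: "N \<ge> 1" and lam: "0 \<le> lam" "lam \<le> 1" and gam: "gam (Suc n) \<ge> 0"
    and xs: "(\<Sum>k=1..N. g k xs) = 0"
    and A3: "\<And>x. tau2 g N xs x \<le> L * (norm (x - xs))\<^sup>2"
    and A5: "\<And>x. (x - xs) \<bullet> ((1 / real N) *\<^sub>R (\<Sum>k=1..N. g k x)) \<ge> \<mu> * (norm (x - xs))\<^sup>2"
  defines "V \<equiv> \<lambda>p. (norm (fst p - xs))\<^sup>2" and "A \<equiv> \<lambda>p. saga_A g N xs (snd p)"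
  shows "saga_mean g N lam gam V x0 x1 (Suc n)
    \<le> (1 - 2 * \<mu> * gam (Suc n) + 3 * L * (gam (Suc n))\<^sup>2) * saga_mean g N lam gam V x0 x1 n
      + 3 * (gam (Suc n))\<^sup>2 * saga_mean g N lam gam A x0 x1 n
      + 3 * (gam (Suc n))\<^sup>2 * ((1 / real N) * (\<Sum>k=1..N. (norm (g k xs))\<^sup>2))"
  unfolding saga_mean_Suc unfolding saga_mean_def path_mean_affine[OF N, symmetric]
proof (rule path_mean_mono)
  fix v
  obtain x phi where st: "saga_state g N lam gam x0 x1 v n = (x, phi)" by force
  show "(1 / real N) * (\<Sum>j=1..N. V (saga_step g N lam (gam (n + 1)) (saga_state g N lam gam x0 x1 v n) j))
    \<le> (1 - 2 * \<mu> * gam (Suc n) + 3 * L * (gam (Suc n))\<^sup>2) * V (saga_state g N lam gam x0 x1 v n)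
      + 3 * (gam (Suc n))\<^sup>2 * A (saga_state g N lam gam x0 x1 v n)
      + 3 * (gam (Suc n))\<^sup>2 * ((1 / real N) * (\<Sum>k=1..N. (norm (g k xs))\<^sup>2))"
    using saga_step_mean_dist_le[where x=x and phi=phi, OF N lam gam xs A3 A5]
    by (simp add: st V_def A_def)
qed

lemma saga_mean_A_le:
  fixes g :: "nat \<Rightarrow> 'a::euclidean_space \<Rightarrow> 'a"
  assumes N: "N \<ge> 1" and A3: "\<And>x. tau2 g N xs x \<le> L * (norm (x - xs))\<^sup>2"
  defines "V \<equiv> \<lambda>p. (norm (fst p - xs))\<^sup>2" and "A \<equiv> \<lambda>p. saga_A g N xs (snd p)"
  shows "saga_mean g N lam gam A x0 x1 (Suc n)
    \<le> (1 - 1 / real N) * saga_mean g N lam gam A x0 x1 n + (L / real N) * saga_mean g N lam gam V x0 x1 n"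
proof -
  have "saga_mean g N lam gam A x0 x1 (Suc n) \<le> path_mean N n (\<lambda>v.
      (1 - 1 / real N) * A (saga_state g N lam gam x0 x1 v n)
      + (L / real N) * V (saga_state g N lam gam x0 x1 v n) + 0)"
    unfolding saga_mean_Suc
  proof (rule path_mean_mono)
    fix v
    obtain x phi where st: "saga_state g N lam gam x0 x1 v n = (x, phi)" by force
    have "(1 / real N) * tau2 g N xs x \<le> (L / real N) * (norm (x - xs))\<^sup>2"
      using A3[of x] N by (simp add: divide_right_mono)
    then show "(1 / real N) * (\<Sum>j=1..N. A (saga_step g N lam (gam (n + 1)) (saga_state g N lam gam x0 x1 v n) j))
      \<le> (1 - 1 / real N) * A (saga_state g N lam gam x0 x1 v n)
        + (L / real N) * V (saga_state g N lam gam x0 x1 v n) + 0"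
      using saga_step_mean_A_eq[OF N, of g xs lam "gam (n + 1)" x phi] by (simp add: st V_def A_def)
  qed
  then show ?thesis unfolding path_mean_affine[OF N] saga_mean_def by simp
qed

lemma saga_mean_tau2_le:
  fixes g :: "nat \<Rightarrow> 'a::euclidean_space \<Rightarrow> 'a"
  assumes A3: "\<And>x. tau2 g N xs x \<le> L * (norm (x - xs))\<^sup>2"
  shows "saga_mean g N lam gam (\<lambda>p. tau2 g N xs (fst p)) x0 x1 n
    \<le> L * saga_mean g N lam gam (\<lambda>p. (norm (fst p - xs))\<^sup>2) x0 x1 n"
proof -
  have "saga_mean g N lam gam (\<lambda>p. tau2 g N xs (fst p)) x0 x1 n
      \<le> path_mean N n (\<lambda>v. L * (norm (fst (saga_state g N lam gam x0 x1 v n) - xs))\<^sup>2)"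
    unfolding saga_mean_def by (rule path_mean_mono) (rule A3)
  then show ?thesis
    unfolding saga_mean_def path_mean_def by (simp add: sum_distrib_left)
qed

section \<open>A coupled deterministic recursion\<close>

locale small_steps =
  fixes \<gamma> :: "nat \<Rightarrow> real" and \<mu> L \<sigma> :: real and N n0 :: nat
  assumes \<gamma>_nonneg: "\<And>n. \<gamma> n \<ge> 0" and \<gamma>_decr: "\<And>n. \<gamma> (Suc n) \<le> \<gamma> n"
    and \<gamma>_sq_summable: "summable (\<lambda>n. (\<gamma> n)\<^sup>2)"
    and \<mu>_pos: "\<mu> > 0" and L_pos: "L > 0" and N_pos: "N \<ge> 1" and \<sigma>_nonneg: "\<sigma> \<ge> 0"
    and \<gamma>_small: "\<And>n. n \<ge> n0 \<Longrightarrow> \<gamma> n \<le> \<mu> / (6 * L)"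
begin

definition growth :: real where
  "growth = 1 + 3 * L * (\<gamma> 0)\<^sup>2 + 3 * (\<gamma> 0)\<^sup>2 + 3 * \<sigma> * (\<gamma> 0)\<^sup>2 + L / real N"

definition weight :: real where
  "weight = \<mu> * real N / L"

definition bound_e :: real where
  "bound_e = real n0 * \<gamma> 0 * (2 * growth + 1) ^ n0
     + (2 / \<mu>) * ((1 + weight * \<gamma> 0) * (2 * growth + 1) ^ n0 + 3 * \<sigma> * (\<Sum>n. (\<gamma> n)\<^sup>2))"

definition bound :: real where
  "bound = bound_e + real N * \<gamma> 0 + L * bound_e"

lemma \<gamma>_le_\<gamma>0: "\<gamma> n \<le> \<gamma> 0"
  by (rule decseqD[OF decseq_SucI[of \<gamma>, OF \<gamma>_decr]]) simp

lemma growth_ge_1: "growth \<ge> 1"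
  using L_pos \<sigma>_nonneg by (simp add: growth_def)

end

locale coupled_recursion = small_steps +
  fixes e a :: "nat \<Rightarrow> real"
  assumes e_nonneg: "\<And>n. e n \<ge> 0" and a_nonneg: "\<And>n. a n \<ge> 0"
    and e_Suc_le: "\<And>n. e (Suc n) \<le> (1 - 2 * \<mu> * \<gamma> n + 3 * L * (\<gamma> n)\<^sup>2) * e n
                           + 3 * (\<gamma> n)\<^sup>2 * a n + 3 * (\<gamma> n)\<^sup>2 * \<sigma>"
    and a_Suc_le: "\<And>n. a (Suc n) \<le> (1 - 1 / real N) * a n + (L / real N) * e n"
begin

text \<open>Before \<open>n0\<close> the steps may be too large for any decrease, but \<open>e + a + 1\<close> grows at most
  geometrically.\<close>

lemma size_Suc_le: "e (Suc n) + a (Suc n) + 1 \<le> (2 * growth + 1) * (e n + a n + 1)"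
proof -
  have sq: "(\<gamma> n)\<^sup>2 \<le> (\<gamma> 0)\<^sup>2"
    using \<gamma>_le_\<gamma>0 \<gamma>_nonneg by (simp add: power_mono)
  have parts: "0 \<le> 3 * L * (\<gamma> 0)\<^sup>2" "0 \<le> 3 * (\<gamma> 0)\<^sup>2" "0 \<le> 3 * \<sigma> * (\<gamma> 0)\<^sup>2" "0 \<le> L / real N"
    using L_pos \<sigma>_nonneg by auto
  have "3 * L * (\<gamma> n)\<^sup>2 \<le> 3 * L * (\<gamma> 0)\<^sup>2"
    using sq L_pos by simp
  moreover have "0 \<le> 2 * \<mu> * \<gamma> n"
    using \<mu>_pos \<gamma>_nonneg by simp
  ultimately have "1 - 2 * \<mu> * \<gamma> n + 3 * L * (\<gamma> n)\<^sup>2 \<le> growth"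
    using parts unfolding growth_def by linarith
  then have "(1 - 2 * \<mu> * \<gamma> n + 3 * L * (\<gamma> n)\<^sup>2) * e n \<le> growth * e n"
    using e_nonneg by (simp add: mult_right_mono)
  moreover have "3 * (\<gamma> n)\<^sup>2 * a n \<le> growth * a n"
    using sq parts a_nonneg unfolding growth_def by (simp add: mult_right_mono)
  moreover have "3 * (\<gamma> n)\<^sup>2 * \<sigma> \<le> growth"
  proof -
    have "3 * (\<gamma> n)\<^sup>2 * \<sigma> \<le> 3 * \<sigma> * (\<gamma> 0)\<^sup>2"
      using mult_left_mono[OF sq \<sigma>_nonneg] by (simp add: mult_ac)
    with parts show ?thesis unfolding growth_def by linarith
  qed
  moreover have "(1 - 1 / real N) * a n \<le> a n"
    using a_nonneg N_pos by (simp add: mult_left_le_one_le)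
  moreover have "(L / real N) * e n \<le> growth * e n"
    using parts e_nonneg unfolding growth_def by (intro mult_right_mono) auto
  moreover have "(2 * growth + 1) * (e n + a n + 1)
      = 2 * (growth * e n) + 2 * (growth * a n) + 2 * growth + e n + a n + 1"
    by (simp add: algebra_simps)
  moreover have "growth * a n \<ge> 0"
    using growth_ge_1 a_nonneg by simp
  ultimately show ?thesis
    using e_Suc_le[of n] a_Suc_le[of n] e_nonneg[of n] growth_ge_1 by linarith
qed

lemma size_le_prefix:
  assumes "n \<le> n0"
  shows "e n + a n + 1 \<le> (2 * growth + 1) ^ n0 * (e 0 + a 0 + 1)"
proof -
  have "e n + a n + 1 \<le> (2 * growth + 1) ^ n * (e 0 + a 0 + 1)"
  proof (induction n)
    case (Suc n)
    have "e (Suc n) + a (Suc n) + 1 \<le> (2 * growth + 1) * (e n + a n + 1)"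
      by (rule size_Suc_le)
    also have "\<dots> \<le> (2 * growth + 1) * ((2 * growth + 1) ^ n * (e 0 + a 0 + 1))"
      by (rule mult_left_mono[OF Suc.IH]) (use growth_ge_1 in simp)
    finally show ?case by (simp add: mult.assoc)
  qed simp
  also have "\<dots> \<le> (2 * growth + 1) ^ n0 * (e 0 + a 0 + 1)"
    using assms growth_ge_1 e_nonneg a_nonneg by (intro mult_right_mono power_increasing) auto
  finally show ?thesis .
qed

text \<open>Once the steps are small, \<open>e + weight \<cdot> \<gamma> \<cdot> a\<close> is a Lyapunov function: the weight is
  chosen so that the drift \<open>L/N \<cdot> e\<close> fed into \<open>a\<close> costs only half of the contraction of \<open>e\<close>.\<close>

lemma lyapunov_Suc_le:
  assumes "n \<ge> n0"
  shows "e (Suc n) + weight * \<gamma> (Suc n) * a (Suc n)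
     \<le> e n + weight * \<gamma> n * a n - (\<mu> / 2) * \<gamma> n * e n + 3 * \<sigma> * (\<gamma> n)\<^sup>2"
proof -
  let ?g = "\<gamma> n"
  have small: "?g \<le> \<mu> / (6 * L)" using \<gamma>_small assms by simp
  have weight_pos: "weight > 0" using \<mu>_pos L_pos N_pos by (simp add: weight_def)
  have "weight * \<gamma> (Suc n) * a (Suc n) \<le> weight * ?g * a (Suc n)"
    using weight_pos a_nonneg \<gamma>_decr by (simp add: mult_right_mono)
  also have "\<dots> \<le> weight * ?g * ((1 - 1 / real N) * a n + (L / real N) * e n)"
    using a_Suc_le weight_pos \<gamma>_nonneg by (simp add: mult_left_mono)
  finally have a_part: "weight * \<gamma> (Suc n) * a (Suc n)
      \<le> weight * ?g * a n - weight / real N * ?g * a n + \<mu> * ?g * e n"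
    using L_pos N_pos by (simp add: weight_def algebra_simps)
  have "3 * L * ?g * (?g * e n) \<le> (\<mu> / 2) * (?g * e n)"
    using small L_pos \<gamma>_nonneg e_nonneg by (intro mult_right_mono) (simp_all add: field_simps)
  moreover have "3 * ?g * (?g * a n) \<le> weight / real N * (?g * a n)"
  proof (rule mult_right_mono)
    have "L * ?g \<ge> 0" using L_pos \<gamma>_nonneg by simp
    then show "3 * ?g \<le> weight / real N"
      using small L_pos N_pos by (simp add: weight_def field_simps)
  qed (use \<gamma>_nonneg a_nonneg in simp)
  ultimately show ?thesis
    using e_Suc_le[of n] a_part by (simp add: power2_eq_square algebra_simps)
qed

lemma weighted_sum_e_tail_le:
  "(\<Sum>n\<in>{n0..<n0+k}. \<gamma> n * e n)
     \<le> (2 / \<mu>) * (e n0 + weight * \<gamma> n0 * a n0 + 3 * \<sigma> * (\<Sum>n. (\<gamma> n)\<^sup>2))"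
proof -
  define W where "W n = e n + weight * \<gamma> n * a n" for n
  have telescope: "(\<mu> / 2) * (\<Sum>n\<in>{n0..<n0+i}. \<gamma> n * e n) + W (n0 + i)
      \<le> W n0 + 3 * \<sigma> * (\<Sum>n\<in>{n0..<n0+i}. (\<gamma> n)\<^sup>2)" for i
  proof (induction i)
    case (Suc j)
    then show ?case
      using lyapunov_Suc_le[of "n0 + j"] by (simp add: W_def algebra_simps)
  qed simp
  have "W (n0 + k) \<ge> 0"
    using e_nonneg a_nonneg \<gamma>_nonneg \<mu>_pos L_pos by (simp add: W_def weight_def)
  moreover have "(\<Sum>n\<in>{n0..<n0+k}. (\<gamma> n)\<^sup>2) \<le> (\<Sum>n. (\<gamma> n)\<^sup>2)"
    by (rule sum_le_suminf[OF \<gamma>_sq_summable]) auto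
  then have "3 * \<sigma> * (\<Sum>n\<in>{n0..<n0+k}. (\<gamma> n)\<^sup>2) \<le> 3 * \<sigma> * (\<Sum>n. (\<gamma> n)\<^sup>2)"
    using \<sigma>_nonneg by (intro mult_left_mono) auto
  ultimately have "(\<mu> / 2) * (\<Sum>n\<in>{n0..<n0+k}. \<gamma> n * e n) \<le> W n0 + 3 * \<sigma> * (\<Sum>n. (\<gamma> n)\<^sup>2)"
    using telescope[of k] by linarith
  then show ?thesis using \<mu>_pos by (simp add: W_def field_simps)
qed

lemma weighted_sum_e_le: "(\<Sum>n<M. \<gamma> n * e n) \<le> bound_e * (e 0 + a 0 + 1)"
proof -
  define s0 P where "s0 = e 0 + a 0 + 1" and "P = (2 * growth + 1) ^ n0"
  have s0: "s0 \<ge> 1" using e_nonneg a_nonneg by (simp add: s0_def)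
  have prefix: "e n \<le> P * s0" "a n \<le> P * s0" if "n \<le> n0" for n
    using size_le_prefix[OF that] e_nonneg[of n] a_nonneg[of n] unfolding s0_def P_def by linarith+
  have "(\<Sum>n<n0. \<gamma> n * e n) \<le> (\<Sum>n<n0. \<gamma> 0 * (P * s0))"
    using prefix \<gamma>_le_\<gamma>0 \<gamma>_nonneg e_nonneg by (intro sum_mono mult_mono) auto
  then have head: "(\<Sum>n<n0. \<gamma> n * e n) \<le> real n0 * \<gamma> 0 * P * s0"
    by (simp add: mult.assoc)
  have "e n0 + weight * \<gamma> n0 * a n0 \<le> (1 + weight * \<gamma> 0) * P * s0"
  proof -
    have "weight * \<gamma> n0 * a n0 \<le> weight * \<gamma> 0 * (P * s0)"
      using \<gamma>_le_\<gamma>0 \<gamma>_nonneg prefix(2)[of n0] a_nonneg \<mu>_pos L_pos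
      by (intro mult_mono) (auto simp: weight_def)
    then show ?thesis using prefix(1)[of n0] by (simp add: algebra_simps)
  qed
  moreover have "3 * \<sigma> * (\<Sum>n. (\<gamma> n)\<^sup>2) \<le> 3 * \<sigma> * (\<Sum>n. (\<gamma> n)\<^sup>2) * s0"
    using mult_left_mono[OF s0, of "3 * \<sigma> * (\<Sum>n. (\<gamma> n)\<^sup>2)"] \<sigma>_nonneg
      suminf_nonneg[OF \<gamma>_sq_summable] by simp
  ultimately have "e n0 + weight * \<gamma> n0 * a n0 + 3 * \<sigma> * (\<Sum>n. (\<gamma> n)\<^sup>2)
      \<le> ((1 + weight * \<gamma> 0) * P + 3 * \<sigma> * (\<Sum>n. (\<gamma> n)\<^sup>2)) * s0"
    by (simp add: distrib_right)
  then have "(\<Sum>n\<in>{n0..<n0+M}. \<gamma> n * e n)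
      \<le> (2 / \<mu>) * (((1 + weight * \<gamma> 0) * P + 3 * \<sigma> * (\<Sum>n. (\<gamma> n)\<^sup>2)) * s0)"
    by (rule order_trans[OF weighted_sum_e_tail_le mult_left_mono]) (use \<mu>_pos in simp)
  with head have "(\<Sum>n<n0. \<gamma> n * e n) + (\<Sum>n\<in>{n0..<n0+M}. \<gamma> n * e n) \<le> bound_e * s0"
    unfolding bound_e_def P_def[symmetric] by (simp add: algebra_simps)
  moreover have "(\<Sum>n<M. \<gamma> n * e n) \<le> (\<Sum>n<n0. \<gamma> n * e n) + (\<Sum>n\<in>{n0..<n0+M}. \<gamma> n * e n)"
  proof -
    have "(\<Sum>n<M. \<gamma> n * e n) \<le> (\<Sum>n<n0 + M. \<gamma> n * e n)"
      using \<gamma>_nonneg e_nonneg by (intro sum_mono2) auto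
    moreover have "(\<Sum>n<n0 + M. \<gamma> n * e n) = (\<Sum>n<n0. \<gamma> n * e n) + (\<Sum>n\<in>{n0..<n0+M}. \<gamma> n * e n)"
      by (simp add: lessThan_atLeast0 sum.atLeastLessThan_concat)
    ultimately show ?thesis by simp
  qed
  ultimately show ?thesis unfolding s0_def by linarith
qed

text \<open>Multiplying the recursion of \<open>a\<close> by the decreasing \<open>\<gamma>\<close> and summing, the factor \<open>1 - 1/N\<close>
  leaves \<open>1/N\<close> of the sum on the left.\<close>

lemma weighted_sum_a_le: "(\<Sum>n<M. \<gamma> n * a n) \<le> real N * (\<gamma> 0 * a 0) + L * (\<Sum>n<M. \<gamma> n * e n)"
proof -
  define B E where "B = (\<Sum>n<M. \<gamma> n * a n)" and "E = (\<Sum>n<M. \<gamma> n * e n)"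
  have step: "\<gamma> (Suc n) * a (Suc n) \<le> (1 - 1 / real N) * (\<gamma> n * a n) + (L / real N) * (\<gamma> n * e n)" for n
  proof -
    have "\<gamma> (Suc n) * a (Suc n) \<le> \<gamma> n * a (Suc n)" using \<gamma>_decr a_nonneg by (simp add: mult_right_mono)
    also have "\<dots> \<le> \<gamma> n * ((1 - 1 / real N) * a n + (L / real N) * e n)"
      using a_Suc_le \<gamma>_nonneg by (simp add: mult_left_mono)
    finally show ?thesis by (simp add: algebra_simps)
  qed
  have "B \<le> (\<Sum>n<Suc M. \<gamma> n * a n)" using \<gamma>_nonneg a_nonneg by (simp add: B_def)
  also have "\<dots> = \<gamma> 0 * a 0 + (\<Sum>n<M. \<gamma> (Suc n) * a (Suc n))"
    by (rule sum.lessThan_Suc_shift)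
  also have "\<dots> \<le> \<gamma> 0 * a 0 + (\<Sum>n<M. (1 - 1 / real N) * (\<gamma> n * a n) + (L / real N) * (\<gamma> n * e n))"
    by (intro add_left_mono sum_mono step)
  also have "\<dots> = \<gamma> 0 * a 0 + (1 - 1 / real N) * B + (L / real N) * E"
    by (simp add: B_def E_def sum.distrib sum_distrib_left)
  finally have "B / real N \<le> \<gamma> 0 * a 0 + (L * E) / real N"
    by (simp add: algebra_simps)
  then show ?thesis
    using N_pos unfolding B_def[symmetric] E_def[symmetric] by (simp add: field_simps)
qed

lemma weighted_sums_le:
  "(\<Sum>n<M. \<gamma> n * e n) \<le> bound * (e 0 + a 0 + 1)"
  "(\<Sum>n<M. \<gamma> n * a n) \<le> bound * (e 0 + a 0 + 1)"
proof -
  have bound_e_nonneg: "bound_e \<ge> 0"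
    using \<gamma>_nonneg \<mu>_pos L_pos N_pos \<sigma>_nonneg growth_ge_1 suminf_nonneg[OF \<gamma>_sq_summable]
    by (simp add: bound_e_def weight_def)
  have s0: "e 0 + a 0 + 1 \<ge> 1" using e_nonneg a_nonneg by simp
  show "(\<Sum>n<M. \<gamma> n * e n) \<le> bound * (e 0 + a 0 + 1)"
    using weighted_sum_e_le[of M] mult_right_mono[of bound_e bound, OF _ order.trans[OF zero_le_one s0]]
      bound_e_nonneg \<gamma>_nonneg L_pos by (simp add: bound_def)
  have "a 0 \<le> e 0 + a 0 + 1" using e_nonneg[of 0] by simp
  then have "real N * (\<gamma> 0 * a 0) \<le> real N * \<gamma> 0 * (e 0 + a 0 + 1)"
    using mult_left_mono[of "a 0" _ "real N * \<gamma> 0"] \<gamma>_nonneg by (simp add: mult.assoc)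
  moreover have "L * (\<Sum>n<M. \<gamma> n * e n) \<le> L * bound_e * (e 0 + a 0 + 1)"
    using weighted_sum_e_le[of M] L_pos by (simp add: mult.assoc mult_left_mono)
  moreover have "bound * (e 0 + a 0 + 1)
      = bound_e * (e 0 + a 0 + 1) + real N * \<gamma> 0 * (e 0 + a 0 + 1) + L * bound_e * (e 0 + a 0 + 1)"
    by (simp add: bound_def algebra_simps)
  moreover have "bound_e * (e 0 + a 0 + 1) \<ge> 0"
    using bound_e_nonneg s0 by simp
  ultimately show "(\<Sum>n<M. \<gamma> n * a n) \<le> bound * (e 0 + a 0 + 1)"
    using weighted_sum_a_le[of M] by linarith
qed

end

lemma saga_mean_weighted_sums_bounded:
  fixes g :: "nat \<Rightarrow> 'a::euclidean_space \<Rightarrow> 'a"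
  assumes N: "N \<ge> 1" and lam: "0 \<le> lam" "lam \<le> 1"
    and gam_nonneg: "\<And>n. gam (Suc n) \<ge> 0" and gam_decr: "\<And>n. gam (Suc (Suc n)) \<le> gam (Suc n)"
    and gam_lim: "gam \<longlonglongrightarrow> 0" and gam_sq: "summable (\<lambda>n. (gam (Suc n))\<^sup>2)"
    and xs: "(\<Sum>k=1..N. g k xs) = 0"
    and L: "L > 0" and A3: "\<And>x. tau2 g N xs x \<le> L * (norm (x - xs))\<^sup>2"
    and \<mu>: "\<mu> > 0" and A5: "\<And>x. (x - xs) \<bullet> ((1 / real N) *\<^sub>R (\<Sum>k=1..N. g k x)) \<ge> \<mu> * (norm (x - xs))\<^sup>2"
  defines "V \<equiv> \<lambda>p. (norm (fst p - xs))\<^sup>2" and "A \<equiv> \<lambda>p. saga_A g N xs (snd p)"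
    and "T \<equiv> \<lambda>p. tau2 g N xs (fst p)"
    and "C \<equiv> \<lambda>x0 x1. (norm (x1 - xs))\<^sup>2 + tau2 g N xs x0 + 1"
  obtains K where
    "\<And>x0 x1 m. (\<Sum>n<m. gam (Suc n) * saga_mean g N lam gam V x0 x1 n) \<le> K * C x0 x1"
    "\<And>x0 x1 m. (\<Sum>n<m. gam (Suc n) * saga_mean g N lam gam A x0 x1 n) \<le> K * C x0 x1"
    "\<And>x0 x1 m. (\<Sum>n<m. gam (Suc n) * saga_mean g N lam gam T x0 x1 n) \<le> L * K * C x0 x1"
proof -
  define \<sigma> where "\<sigma> = (1 / real N) * (\<Sum>k=1..N. (norm (g k xs))\<^sup>2)"
  have "\<mu> / (6 * L) > 0" using \<mu> L by simp
  with LIMSEQ_Suc[OF gam_lim] obtain n0 where "\<And>n. n \<ge> n0 \<Longrightarrow> gam (Suc n) \<le> \<mu> / (6 * L)"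
    by (metis LIMSEQ_D abs_less_iff diff_zero less_eq_real_def real_norm_def)
  then interpret small_steps "\<lambda>n. gam (Suc n)" \<mu> L \<sigma> N n0
    using gam_nonneg gam_decr gam_sq \<mu> L N by unfold_locales (simp_all add: \<sigma>_def sum_nonneg)
  txt \<open>\<open>bound\<close> depends only on the step data, so the estimate is uniform in \<open>x0\<close> and \<open>x1\<close>.\<close>
  have sums: "(\<Sum>n<m. gam (Suc n) * saga_mean g N lam gam V x0 x1 n) \<le> bound * C x0 x1 \<and>
      (\<Sum>n<m. gam (Suc n) * saga_mean g N lam gam A x0 x1 n) \<le> bound * C x0 x1" for x0 x1 m
  proof -
    interpret coupled_recursion "\<lambda>n. gam (Suc n)" \<mu> L \<sigma> N n0
      "saga_mean g N lam gam V x0 x1" "saga_mean g N lam gam A x0 x1"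
      using saga_mean_dist_le[where g=g and xs=xs and gam=gam, OF N lam gam_nonneg xs A3 A5]
        saga_mean_A_le[where g=g and xs=xs, OF N A3]
      by unfold_locales
        (auto simp: V_def A_def \<sigma>_def saga_mean_def intro!: path_mean_nonneg saga_A_nonneg)
    have "saga_mean g N lam gam V x0 x1 0 + saga_mean g N lam gam A x0 x1 0 + 1 = C x0 x1"
      by (simp add: saga_mean_0 V_def A_def C_def saga_A_def tau2_def)
    then show ?thesis using weighted_sums_le by simp
  qed
  show ?thesis
  proof (rule that[of bound])
    show "(\<Sum>n<m. gam (Suc n) * saga_mean g N lam gam T x0 x1 n) \<le> L * bound * C x0 x1" for x0 x1 m
    proof -
      have "(\<Sum>n<m. gam (Suc n) * saga_mean g N lam gam T x0 x1 n)
          \<le> (\<Sum>n<m. L * (gam (Suc n) * saga_mean g N lam gam V x0 x1 n))"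
        using saga_mean_tau2_le[OF A3] gam_nonneg unfolding T_def V_def
        by (intro sum_mono) (metis mult.left_commute mult_left_mono)
      also have "\<dots> \<le> L * (bound * C x0 x1)"
        using sums L by (simp add: sum_distrib_left[symmetric])
      finally show ?thesis by (simp add: mult.assoc)
    qed
  qed (use sums in blast)+
qed

lemma saga_state_measurable:
  fixes g :: "nat \<Rightarrow> 'a::euclidean_space \<Rightarrow> 'a" and K :: "'c measure"
  assumes g: "\<And>k. k \<in> {1..N} \<Longrightarrow> g k \<in> borel_measurable borel"
    and v: "\<And>m. m \<in> {2..n+1} \<Longrightarrow> v m \<in> {1..N}"
    and y0: "y0 \<in> borel_measurable K" and y1: "y1 \<in> borel_measurable K"
  shows "(\<lambda>\<omega>. fst (saga_state g N lam gam (y0 \<omega>) (y1 \<omega>) v n)) \<in> borel_measurable K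
       \<and> (\<forall>k. (\<lambda>\<omega>. snd (saga_state g N lam gam (y0 \<omega>) (y1 \<omega>) v n) k) \<in> borel_measurable K)"
  using v
proof (induction n)
  case 0
  then show ?case using y0 y1 by simp
next
  case (Suc n)
  define x where "x \<omega> = fst (saga_state g N lam gam (y0 \<omega>) (y1 \<omega>) v n)" for \<omega>
  define phi where "phi \<omega> = snd (saga_state g N lam gam (y0 \<omega>) (y1 \<omega>) v n)" for \<omega>
  have x: "x \<in> borel_measurable K" and phi: "\<And>k. (\<lambda>\<omega>. phi \<omega> k) \<in> borel_measurable K"
    using Suc unfolding x_def phi_def by auto
  have j: "v (n + 2) \<in> {1..N}" using Suc.prems[of "n + 2"] by auto
  have state: "saga_state g N lam gam (y0 \<omega>) (y1 \<omega>) v (Suc n)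
      = saga_step g N lam (gam (n + 1)) (x \<omega>, phi \<omega>) (v (n + 2))" for \<omega>
    by (simp only: saga_state_Suc_step x_def phi_def prod.collapse)
  have "(\<lambda>\<omega>. saga_direction g N lam (x \<omega>) (phi \<omega>) (v (n + 2))) \<in> borel_measurable K"
    unfolding saga_direction_def
    using measurable_compose[OF x g[OF j]] measurable_compose[OF phi g]
      measurable_compose[OF phi g[OF j]]
    by (intro borel_measurable_diff borel_measurable_scaleR borel_measurable_sum) (auto simp: o_def)
  then have "(\<lambda>\<omega>. x \<omega> - gam (n + 1) *\<^sub>R saga_direction g N lam (x \<omega>) (phi \<omega>) (v (n + 2)))
      \<in> borel_measurable K"
    using x by simp
  moreover have "(\<lambda>\<omega>. ((phi \<omega>)(v (n + 2) := x \<omega>)) k) \<in> borel_measurable K" for k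
    using x phi by (cases "k = v (n + 2)") simp_all
  ultimately show ?case
    unfolding state saga_step.simps prod.sel by blast
qed

lemma saga_quantities_measurable:
  fixes g :: "nat \<Rightarrow> 'a::euclidean_space \<Rightarrow> 'a" and lam :: real and gam :: "nat \<Rightarrow> real"
  assumes g: "\<And>k. k \<in> {1..N} \<Longrightarrow> g k \<in> borel_measurable borel" and v: "v \<in> index_paths N n"
  defines "S \<equiv> \<lambda>p::'a \<times> 'a. saga_state g N lam gam (fst p) (snd p) v n"
  shows "(\<lambda>p. (norm (fst (S p) - xs))\<^sup>2) \<in> borel_measurable borel"
    and "(\<lambda>p. saga_A g N xs (snd (S p))) \<in> borel_measurable borel"
    and "(\<lambda>p. tau2 g N xs (fst (S p))) \<in> borel_measurable borel"
proof -
  have "\<And>m. m \<in> {2..n+1} \<Longrightarrow> v m \<in> {1..N}" using v by (auto simp: index_paths_def)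
  from saga_state_measurable[OF g this measurable_fst measurable_snd]
  have fst_S: "(\<lambda>p. fst (S p)) \<in> borel_measurable borel"
    and snd_S: "\<And>k. (\<lambda>p. snd (S p) k) \<in> borel_measurable borel"
    unfolding S_def borel_prod by auto
  show "(\<lambda>p. (norm (fst (S p) - xs))\<^sup>2) \<in> borel_measurable borel"
    using fst_S by measurable
  show "(\<lambda>p. saga_A g N xs (snd (S p))) \<in> borel_measurable borel"
    by (rule saga_A_measurable[OF g snd_S])
  show "(\<lambda>p. tau2 g N xs (fst (S p))) \<in> borel_measurable borel"
    by (rule tau2_measurable[OF g fst_S])
qed

section \<open>Independent uniform indices\<close>

lemma (in prob_space) indep_var_if_sub_algebras:
  assumes indep: "indep_set (sets F1) (sets F2)"
    and spaces: "space F1 = space M" "space F2 = space M"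
    and Z1: "Z1 \<in> measurable F1 S" "Z1 \<in> measurable M S"
    and Z2: "Z2 \<in> measurable F2 T" "Z2 \<in> measurable M T"
  shows "indep_var S Z1 T Z2"
proof -
  have "sigma_sets (space M) {Z1 -` A \<inter> space M | A. A \<in> sets S} \<subseteq> sets F1"
    using measurable_sets[OF Z1(1)] spaces
    by (intro sigma_algebra.sigma_sets_subset[of _ "sets F1"])
      (auto simp: sets.sigma_algebra_axioms[of F1, unfolded spaces])
  moreover have "sigma_sets (space M) {Z2 -` A \<inter> space M | A. A \<in> sets T} \<subseteq> sets F2"
    using measurable_sets[OF Z2(1)] spaces
    by (intro sigma_algebra.sigma_sets_subset[of _ "sets F2"])
      (auto simp: sets.sigma_algebra_axioms[of F2, unfolded spaces])
  ultimately show ?thesis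
    using indep Z1(2) Z2(2) unfolding indep_var_eq indep_sets2_eq by blast
qed

lemma (in prob_space) nn_integral_mult_indep_var:
  fixes Z1 Z2 :: "'a \<Rightarrow> ennreal"
  assumes "indep_var borel Z1 borel Z2"
  shows "(\<integral>\<^sup>+\<omega>. Z1 \<omega> * Z2 \<omega> \<partial>M) = (\<integral>\<^sup>+\<omega>. Z1 \<omega> \<partial>M) * (\<integral>\<^sup>+\<omega>. Z2 \<omega> \<partial>M)"
proof -
  have "case_bool (borel :: ennreal measure) borel = (\<lambda>_. borel)"
    by (rule ext) (simp split: bool.split)
  then have "indep_vars (\<lambda>_. borel) (case_bool Z1 Z2) UNIV"
    using assms unfolding indep_var_def by simp
  then have "(\<integral>\<^sup>+\<omega>. (\<Prod>i\<in>UNIV. case_bool Z1 Z2 i \<omega>) \<partial>M) = (\<Prod>i\<in>UNIV. \<integral>\<^sup>+\<omega>. case_bool Z1 Z2 i \<omega> \<partial>M)"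
    by (intro indep_vars_nn_integral) auto
  then show ?thesis by (simp add: UNIV_bool mult.commute)
qed

locale uniform_sampling = prob_space M for M :: "'b measure" +
  fixes N :: nat and X0 X1 :: "'b \<Rightarrow> 'a::euclidean_space" and U :: "nat \<Rightarrow> 'b \<Rightarrow> nat"
  assumes N_pos: "N \<ge> 1"
    and X0_measurable: "X0 \<in> borel_measurable M" and X1_measurable: "X1 \<in> borel_measurable M"
    and U_measurable: "\<And>n. n \<ge> 2 \<Longrightarrow> U n \<in> measurable M (count_space UNIV)"
    and U_uniform: "\<And>n. n \<ge> 2 \<Longrightarrow>
        distr M (count_space UNIV) (U n) = measure_pmf (pmf_of_set {1..N})"
    and U_indep: "indep_vars (\<lambda>_. count_space UNIV) U {2..}"
    and initial_index_indep: "indep_set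
        (sets (vimage_algebra (space M) (\<lambda>\<omega>. (X0 \<omega>, X1 \<omega>)) borel))
        (sets (vimage_algebra (space M) (\<lambda>\<omega>. \<lambda>n\<in>{2::nat..}. U n \<omega>)
                (PiM {2..} (\<lambda>_. count_space (UNIV::nat set)))))"
begin

abbreviation index_algebra :: "'b measure" where
  "index_algebra \<equiv> vimage_algebra (space M) (\<lambda>\<omega>. \<lambda>n\<in>{2::nat..}. U n \<omega>)
     (PiM {2..} (\<lambda>_. count_space (UNIV::nat set)))"

abbreviation initial_algebra :: "'b measure" where
  "initial_algebra \<equiv> vimage_algebra (space M) (\<lambda>\<omega>. (X0 \<omega>, X1 \<omega>)) borel"

definition path_event :: "nat \<Rightarrow> (nat \<Rightarrow> nat) \<Rightarrow> 'b set" where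
  "path_event n v = {\<omega> \<in> space M. \<forall>m\<in>{2..n+1}. U m \<omega> = v m}"

lemma initial_measurable: "(\<lambda>\<omega>. (X0 \<omega>, X1 \<omega>)) \<in> borel_measurable M"
  using X0_measurable X1_measurable by (rule borel_measurable_Pair)

lemma index_algebra_subset_events: "sets index_algebra \<subseteq> events"
  using initial_index_indep unfolding indep_sets2_eq by blast

lemma prob_U_eq:
  assumes m: "m \<ge> 2" and j: "j \<in> {1..N}"
  shows "prob (U m -` {j} \<inter> space M) = 1 / real N"
proof -
  have "prob (U m -` {j} \<inter> space M) = measure (distr M (count_space UNIV) (U m)) {j}"
    by (rule measure_distr[OF U_measurable[OF m], symmetric]) simp
  also have "\<dots> = pmf (pmf_of_set {1..N}) j"
    unfolding U_uniform[OF m] measure_pmf_single ..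
  finally show ?thesis using j N_pos by simp
qed

lemma prob_path_event:
  assumes v: "v \<in> index_paths N n"
  shows "prob (path_event n v) = 1 / real N ^ n"
proof (cases "n = 0")
  case True
  then have "path_event n v = space M" unfolding path_event_def by auto
  then show ?thesis using True prob_space by simp
next
  case False
  then have "path_event n v = (\<Inter>m\<in>{2..n+1}. U m -` {v m} \<inter> space M)"
    unfolding path_event_def by auto
  moreover have "prob (\<Inter>m\<in>{2..n+1}. U m -` {v m} \<inter> space M)
      = (\<Prod>m\<in>{2..n+1}. prob (U m -` {v m} \<inter> space M))"
    by (rule indep_varsD[OF U_indep]) (use False in auto)
  moreover have "\<dots> = (\<Prod>m\<in>{2..n+1}. 1 / real N)"
    by (intro prod.cong refl prob_U_eq) (use v in \<open>auto simp: index_paths_def\<close>)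
  ultimately show ?thesis by (simp add: power_one_over)
qed

lemma path_event_in_index_algebra: "path_event n v \<in> sets index_algebra"
proof -
  let ?P = "PiM {2::nat..} (\<lambda>_. count_space (UNIV::nat set))"
  define C where "C = {f \<in> space ?P. \<forall>m\<in>{2..n+1}. f m = v m}"
  have maps: "(\<lambda>\<omega>. \<lambda>n\<in>{2::nat..}. U n \<omega>) \<in> space M \<rightarrow> space ?P" by (auto simp: space_PiM)
  have "C \<in> sets ?P"
  proof (cases "n = 0")
    case False
    then have "C = (\<Inter>m\<in>{2..n+1}. (\<lambda>f. f m) -` {v m} \<inter> space ?P)"
      by (auto simp: C_def)
    also have "\<dots> \<in> sets ?P"
      using False measurable_component_singleton[of _ "{2::nat..}" "\<lambda>_. count_space UNIV"]
      by (intro sets.finite_INT measurable_sets[where A="count_space UNIV"]) auto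
    finally show ?thesis .
  qed (simp add: C_def)
  moreover have "path_event n v = (\<lambda>\<omega>. \<lambda>n\<in>{2::nat..}. U n \<omega>) -` C \<inter> space M"
    unfolding path_event_def C_def by (auto simp: space_PiM)
  ultimately show ?thesis unfolding sets_vimage_algebra2[OF maps] by blast
qed

lemma AE_U_in_range: "AE \<omega> in M. \<forall>m\<ge>2. U m \<omega> \<in> {1..N}"
proof (subst AE_all_countable, intro allI impI)
  fix m :: nat
  show "AE \<omega> in M. m \<ge> 2 \<longrightarrow> U m \<omega> \<in> {1..N}"
  proof (cases "m \<ge> 2")
    case True
    have "AE x in distr M (count_space UNIV) (U m). x \<in> {1..N}"
      unfolding U_uniform[OF True] AE_measure_pmf_iff using N_pos by simp
    then show ?thesis by (auto dest: AE_distrD[OF U_measurable[OF True]])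
  qed simp
qed

lemma nn_integral_mult_indicator_index_event:
  fixes h :: "'a \<times> 'a \<Rightarrow> real"
  assumes h: "h \<in> borel_measurable borel" and B: "B \<in> sets index_algebra"
  shows "(\<integral>\<^sup>+\<omega>. ennreal (h (X0 \<omega>, X1 \<omega>)) * indicator B \<omega> \<partial>M)
       = ennreal (prob B) * (\<integral>\<^sup>+\<omega>. ennreal (h (X0 \<omega>, X1 \<omega>)) \<partial>M)"
proof -
  have h': "(\<lambda>p. ennreal (h p)) \<in> borel_measurable borel" using h by measurable
  have B_event: "B \<in> events" using B index_algebra_subset_events by blast
  have "indep_var borel (\<lambda>\<omega>. ennreal (h (X0 \<omega>, X1 \<omega>))) borel (\<lambda>\<omega>. indicator B \<omega> :: ennreal)"
  proof (rule indep_var_if_sub_algebras[OF initial_index_indep])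
    show "(\<lambda>\<omega>. ennreal (h (X0 \<omega>, X1 \<omega>))) \<in> borel_measurable initial_algebra"
      using measurable_compose[OF measurable_vimage_algebra1 h'] by (auto simp: o_def)
    show "(\<lambda>\<omega>. ennreal (h (X0 \<omega>, X1 \<omega>))) \<in> borel_measurable M"
      using measurable_compose[OF initial_measurable h'] by (simp add: o_def)
    show "(\<lambda>\<omega>. indicator B \<omega> :: ennreal) \<in> borel_measurable index_algebra"
      using B by simp
    show "(\<lambda>\<omega>. indicator B \<omega> :: ennreal) \<in> borel_measurable M"
      using B_event by simp
  qed simp_all
  then have "(\<integral>\<^sup>+\<omega>. ennreal (h (X0 \<omega>, X1 \<omega>)) * indicator B \<omega> \<partial>M)
      = (\<integral>\<^sup>+\<omega>. ennreal (h (X0 \<omega>, X1 \<omega>)) \<partial>M) * (\<integral>\<^sup>+\<omega>. indicator B \<omega> \<partial>M)"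
    by (rule nn_integral_mult_indep_var)
  then show ?thesis
    using B_event by (simp add: emeasure_eq_measure mult.commute)
qed

lemma eq_sum_path_events:
  fixes F :: "(nat \<Rightarrow> nat) \<Rightarrow> real"
  assumes \<omega>: "\<omega> \<in> space M" "\<forall>m\<ge>2. U m \<omega> \<in> {1..N}"
    and local: "\<And>v w. (\<And>m. m \<in> {2..n+1} \<Longrightarrow> v m = w m) \<Longrightarrow> F v = F w"
  shows "F (\<lambda>m. U m \<omega>) = (\<Sum>v\<in>index_paths N n. indicator (path_event n v) \<omega> * F v)"
proof -
  define v0 where "v0 = restrict (\<lambda>m. U m \<omega>) {2..n+1}"
  have v0: "v0 \<in> index_paths N n" unfolding v0_def index_paths_def using \<omega>(2) by auto
  have ind: "indicator (path_event n v) \<omega> = (if v = v0 then 1 else (0::real))"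
    if "v \<in> index_paths N n" for v
  proof -
    have "(\<forall>m\<in>{2..n+1}. U m \<omega> = v m) \<longleftrightarrow> v = v0"
      using that unfolding v0_def index_paths_def by (auto simp: fun_eq_iff PiE_iff extensional_def)
    then show ?thesis using \<omega>(1) unfolding path_event_def by (auto simp: indicator_def)
  qed
  have "(\<Sum>v\<in>index_paths N n. indicator (path_event n v) \<omega> * F v)
      = (\<Sum>v\<in>index_paths N n. if v = v0 then F v else 0)"
    by (intro sum.cong refl) (simp add: ind v0)
  also have "\<dots> = F v0"
    using v0 finite_index_paths by simp
  also have "\<dots> = F (\<lambda>m. U m \<omega>)"
    by (rule local) (simp add: v0_def)
  finally show ?thesis ..
qed

lemma nn_integral_path_event_sum:
  fixes h :: "'a \<times> 'a \<Rightarrow> (nat \<Rightarrow> nat) \<Rightarrow> real"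
  assumes nonneg: "\<And>p v. h p v \<ge> 0"
    and meas: "\<And>v. v \<in> index_paths N n \<Longrightarrow> (\<lambda>p. h p v) \<in> borel_measurable borel"
  shows "(\<integral>\<^sup>+\<omega>. ennreal (\<Sum>v\<in>index_paths N n. indicator (path_event n v) \<omega> * h (X0 \<omega>, X1 \<omega>) v) \<partial>M)
       = (\<integral>\<^sup>+\<omega>. ennreal (path_mean N n (h (X0 \<omega>, X1 \<omega>))) \<partial>M)"
proof -
  have h_M: "(\<lambda>\<omega>. h (X0 \<omega>, X1 \<omega>) v) \<in> borel_measurable M" if "v \<in> index_paths N n" for v
    using measurable_compose[OF initial_measurable meas[OF that]] by (simp add: o_def)
  have events: "path_event n v \<in> events" for v
    using path_event_in_index_algebra index_algebra_subset_events by blast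
  have "(\<integral>\<^sup>+\<omega>. ennreal (\<Sum>v\<in>index_paths N n. indicator (path_event n v) \<omega> * h (X0 \<omega>, X1 \<omega>) v) \<partial>M)
      = (\<Sum>v\<in>index_paths N n. \<integral>\<^sup>+\<omega>. ennreal (h (X0 \<omega>, X1 \<omega>) v) * indicator (path_event n v) \<omega> \<partial>M)"
    using h_M events nonneg
    by (subst nn_integral_sum[symmetric])
       (auto intro!: nn_integral_cong simp: sum_ennreal[symmetric] ennreal_mult' ennreal_indicator mult.commute)
  also have "\<dots> = (\<Sum>v\<in>index_paths N n. \<integral>\<^sup>+\<omega>. ennreal (h (X0 \<omega>, X1 \<omega>) v / real N ^ n) \<partial>M)"
    using nn_integral_mult_indicator_index_event[OF meas path_event_in_index_algebra]
      prob_path_event h_M nonneg N_pos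
    by (intro sum.cong refl) (simp add: nn_integral_cmult[symmetric] ennreal_mult'[symmetric] divide_inverse mult.commute)
  also have "\<dots> = (\<integral>\<^sup>+\<omega>. ennreal (path_mean N n (h (X0 \<omega>, X1 \<omega>))) \<partial>M)"
    using h_M nonneg
    by (subst nn_integral_sum[symmetric])
       (auto intro!: nn_integral_cong simp: path_mean_def sum_ennreal sum_divide_distrib)
  finally show ?thesis .
qed

lemma path_mean_initial_measurable:
  assumes "\<And>v. v \<in> index_paths N n \<Longrightarrow> (\<lambda>p. h p v) \<in> borel_measurable borel"
  shows "(\<lambda>\<omega>. path_mean N n (h (X0 \<omega>, X1 \<omega>))) \<in> borel_measurable M"
  unfolding path_mean_def
  using measurable_compose[OF initial_measurable assms]
  by (intro borel_measurable_divide borel_measurable_sum) (auto simp: o_def)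

lemma suminf_weighted_path_means_finite:
  fixes h :: "nat \<Rightarrow> 'a \<times> 'a \<Rightarrow> (nat \<Rightarrow> nat) \<Rightarrow> real"
  assumes nonneg: "\<And>n p v. h n p v \<ge> 0"
    and meas: "\<And>n v. v \<in> index_paths N n \<Longrightarrow> (\<lambda>p. h n p v) \<in> borel_measurable borel"
    and w_nonneg: "\<And>n. w n \<ge> 0"
    and bounded: "\<And>p m. (\<Sum>n<m. w n * path_mean N n (h n p)) \<le> B p"
    and B_finite: "(\<integral>\<^sup>+\<omega>. ennreal (B (X0 \<omega>, X1 \<omega>)) \<partial>M) < \<infinity>"
  shows "(\<Sum>n. ennreal (w n) * (\<integral>\<^sup>+\<omega>. ennreal (path_mean N n (h n (X0 \<omega>, X1 \<omega>))) \<partial>M)) < \<infinity>"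
proof -
  define P where "P n \<omega> = w n * path_mean N n (h n (X0 \<omega>, X1 \<omega>))" for n \<omega>
  have P_nonneg: "P n \<omega> \<ge> 0" for n \<omega>
    unfolding P_def using w_nonneg nonneg by (simp add: path_mean_nonneg)
  have P_meas: "P n \<in> borel_measurable M" for n
    unfolding P_def using path_mean_initial_measurable[OF meas] by simp
  have "(\<Sum>n. ennreal (w n) * (\<integral>\<^sup>+\<omega>. ennreal (path_mean N n (h n (X0 \<omega>, X1 \<omega>))) \<partial>M))
      = (\<Sum>n. \<integral>\<^sup>+\<omega>. ennreal (P n \<omega>) \<partial>M)"
    using path_mean_initial_measurable[OF meas] w_nonneg nonneg
    by (simp add: P_def nn_integral_cmult[symmetric] ennreal_mult path_mean_nonneg)
  also have "\<dots> = (\<integral>\<^sup>+\<omega>. (\<Sum>n. ennreal (P n \<omega>)) \<partial>M)"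
    by (rule nn_integral_suminf[symmetric]) (use P_meas in simp)
  also have "\<dots> \<le> (\<integral>\<^sup>+\<omega>. ennreal (B (X0 \<omega>, X1 \<omega>)) \<partial>M)"
  proof (rule nn_integral_mono)
    fix \<omega>
    have partial: "(\<Sum>n<m. P n \<omega>) \<le> B (X0 \<omega>, X1 \<omega>)" for m
      unfolding P_def by (rule bounded)
    have "summable (\<lambda>n. P n \<omega>)"
      by (rule summableI_nonneg_bounded[OF P_nonneg partial])
    then show "(\<Sum>n. ennreal (P n \<omega>)) \<le> ennreal (B (X0 \<omega>, X1 \<omega>))"
      using P_nonneg partial by (simp add: suminf_ennreal2 ennreal_leI suminf_le_const)
  qed
  finally show ?thesis using B_finite by (simp add: less_le_trans)
qed

text \<open>The measurable substitute \<open>R\<close> for \<open>h n (X\<^sub>0, X\<^sub>1) U\<close>, which agrees with it almost surely,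
  is needed because \<open>h n p v\<close> is only assumed measurable along admissible index paths.\<close>

lemma weighted_sums_finite:
  fixes h :: "nat \<Rightarrow> 'a \<times> 'a \<Rightarrow> (nat \<Rightarrow> nat) \<Rightarrow> real"
  assumes nonneg: "\<And>n p v. h n p v \<ge> 0"
    and meas: "\<And>n v. v \<in> index_paths N n \<Longrightarrow> (\<lambda>p. h n p v) \<in> borel_measurable borel"
    and local: "\<And>n p v v'. (\<And>m. m \<in> {2..n+1} \<Longrightarrow> v m = v' m) \<Longrightarrow> h n p v = h n p v'"
    and w_nonneg: "\<And>n. w n \<ge> 0"
    and bounded: "\<And>p m. (\<Sum>n<m. w n * path_mean N n (h n p)) \<le> B p"
    and B_finite: "(\<integral>\<^sup>+\<omega>. ennreal (B (X0 \<omega>, X1 \<omega>)) \<partial>M) < \<infinity>"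
  shows "AE \<omega> in M. summable (\<lambda>n. w n * h n (X0 \<omega>, X1 \<omega>) (\<lambda>m. U m \<omega>))"
    and "(\<Sum>n. ennreal (w n) * (\<integral>\<^sup>+\<omega>. ennreal (h n (X0 \<omega>, X1 \<omega>) (\<lambda>m. U m \<omega>)) \<partial>M)) < \<infinity>"
proof -
  define R where
    "R n \<omega> = (\<Sum>v\<in>index_paths N n. indicator (path_event n v) \<omega> * h n (X0 \<omega>, X1 \<omega>) v)" for n \<omega>
  have R_nonneg: "R n \<omega> \<ge> 0" for n \<omega>
    unfolding R_def by (intro sum_nonneg mult_nonneg_nonneg) (auto simp: nonneg)
  have R_meas: "R n \<in> borel_measurable M" for n
    unfolding R_def
    using measurable_compose[OF initial_measurable meas] path_event_in_index_algebra
      index_algebra_subset_events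
    by (intro borel_measurable_sum borel_measurable_times borel_measurable_indicator)
      (auto simp: o_def)
  have AE_R: "AE \<omega> in M. \<forall>n. h n (X0 \<omega>, X1 \<omega>) (\<lambda>m. U m \<omega>) = R n \<omega>"
    using AE_U_in_range AE_space
    by eventually_elim (auto simp: R_def intro!: eq_sum_path_events local)
  have int_R: "(\<integral>\<^sup>+\<omega>. ennreal (R n \<omega>) \<partial>M) = (\<integral>\<^sup>+\<omega>. ennreal (path_mean N n (h n (X0 \<omega>, X1 \<omega>))) \<partial>M)" for n
    unfolding R_def by (rule nn_integral_path_event_sum[OF nonneg meas])
  have fin: "(\<Sum>n. ennreal (w n) * (\<integral>\<^sup>+\<omega>. ennreal (R n \<omega>) \<partial>M)) < \<infinity>"
    unfolding int_R by (rule suminf_weighted_path_means_finite[OF nonneg meas w_nonneg bounded B_finite])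
  have "(\<integral>\<^sup>+\<omega>. ennreal (h n (X0 \<omega>, X1 \<omega>) (\<lambda>m. U m \<omega>)) \<partial>M) = (\<integral>\<^sup>+\<omega>. ennreal (R n \<omega>) \<partial>M)" for n
    by (rule nn_integral_cong_AE) (use AE_R in \<open>auto elim: eventually_mono\<close>)
  with fin show "(\<Sum>n. ennreal (w n) * (\<integral>\<^sup>+\<omega>. ennreal (h n (X0 \<omega>, X1 \<omega>) (\<lambda>m. U m \<omega>)) \<partial>M)) < \<infinity>"
    by simp
  have "(\<integral>\<^sup>+\<omega>. (\<Sum>n. ennreal (w n * R n \<omega>)) \<partial>M) = (\<Sum>n. ennreal (w n) * (\<integral>\<^sup>+\<omega>. ennreal (R n \<omega>) \<partial>M))"
    using R_meas w_nonneg R_nonneg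
    by (simp add: nn_integral_suminf ennreal_mult nn_integral_cmult)
  then have "AE \<omega> in M. (\<Sum>n. ennreal (w n * R n \<omega>)) \<noteq> \<infinity>"
    using fin R_meas by (intro nn_integral_PInf_AE) auto
  with AE_R show "AE \<omega> in M. summable (\<lambda>n. w n * h n (X0 \<omega>, X1 \<omega>) (\<lambda>m. U m \<omega>))"
  proof eventually_elim
    case (elim \<omega>)
    then show ?case
      using w_nonneg R_nonneg by (auto intro: summable_suminf_not_top simp: top_unique)
  qed
qed

lemma saga_weighted_sums_finite:
  fixes g :: "nat \<Rightarrow> 'a \<Rightarrow> 'a" and Q :: "'a \<times> (nat \<Rightarrow> 'a) \<Rightarrow> real"
  assumes Q_nonneg: "\<And>p. Q p \<ge> 0"
    and Q_meas: "\<And>n v. v \<in> index_paths N n \<Longrightarrow>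
        (\<lambda>p. Q (saga_state g N lam gam (fst p) (snd p) v n)) \<in> borel_measurable borel"
    and gam_nonneg: "\<And>n. gam (Suc n) \<ge> 0"
    and bounded: "\<And>x0 x1 m. (\<Sum>n<m. gam (Suc n) * saga_mean g N lam gam Q x0 x1 n) \<le> B x0 x1"
    and B_finite: "(\<integral>\<^sup>+\<omega>. ennreal (B (X0 \<omega>) (X1 \<omega>)) \<partial>M) < \<infinity>"
  shows "(AE \<omega> in M. summable (\<lambda>n. gam (Suc n) * Q (saga_state g N lam gam (X0 \<omega>) (X1 \<omega>) (\<lambda>m. U m \<omega>) n)))
    \<and> (\<Sum>n. ennreal (gam (Suc n)) *
         (\<integral>\<^sup>+\<omega>. ennreal (Q (saga_state g N lam gam (X0 \<omega>) (X1 \<omega>) (\<lambda>m. U m \<omega>) n)) \<partial>M)) < \<infinity>"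
proof -
  let ?h = "\<lambda>n p v. Q (saga_state g N lam gam (fst p) (snd p) v n)"
  have local: "?h n p v = ?h n p v'" if "\<And>m. m \<in> {2..n+1} \<Longrightarrow> v m = v' m" for n p v v'
    by (simp only: saga_state_cong[OF that])
  have bounded': "(\<Sum>n<m. gam (Suc n) * path_mean N n (?h n p)) \<le> B (fst p) (snd p)" for p m
    using bounded unfolding saga_mean_def .
  show ?thesis
    using weighted_sums_finite[of ?h, OF Q_nonneg Q_meas local gam_nonneg bounded'] B_finite
    by simp
qed

end

lemma (in prob_space) nn_integral_initial_bound_finite:
  fixes X0 X1 :: "'a \<Rightarrow> 'c::euclidean_space"
  assumes X0: "integrable M (\<lambda>\<omega>. (norm (X0 \<omega>))\<^sup>2)" and X1: "integrable M (\<lambda>\<omega>. (norm (X1 \<omega>))\<^sup>2)"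
    and L: "L \<ge> 0" and A3: "\<And>x. tau2 g N xs x \<le> L * (norm (x - xs))\<^sup>2"
  shows "(\<integral>\<^sup>+\<omega>. ennreal (c * ((norm (X1 \<omega> - xs))\<^sup>2 + tau2 g N xs (X0 \<omega>) + 1)) \<partial>M) < \<infinity>"
proof -
  define D where "D \<omega> = \<bar>c\<bar> * (2 * (norm (X1 \<omega>))\<^sup>2 + 2 * (norm xs)\<^sup>2
      + L * (2 * (norm (X0 \<omega>))\<^sup>2 + 2 * (norm xs)\<^sup>2) + 1)" for \<omega>
  have "c * ((norm (X1 \<omega> - xs))\<^sup>2 + tau2 g N xs (X0 \<omega>) + 1) \<le> D \<omega>" for \<omega>
  proof -
    have "tau2 g N xs (X0 \<omega>) \<le> L * (2 * (norm (X0 \<omega>))\<^sup>2 + 2 * (norm xs)\<^sup>2)"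
      using A3[of "X0 \<omega>"] mult_left_mono[OF norm_diff_power2_le L] by (rule order_trans)
    then have "(norm (X1 \<omega> - xs))\<^sup>2 + tau2 g N xs (X0 \<omega>) + 1
        \<le> 2 * (norm (X1 \<omega>))\<^sup>2 + 2 * (norm xs)\<^sup>2 + L * (2 * (norm (X0 \<omega>))\<^sup>2 + 2 * (norm xs)\<^sup>2) + 1"
      using norm_diff_power2_le[of "X1 \<omega>" xs] by linarith
    moreover have "c * ((norm (X1 \<omega> - xs))\<^sup>2 + tau2 g N xs (X0 \<omega>) + 1)
        \<le> \<bar>c\<bar> * ((norm (X1 \<omega> - xs))\<^sup>2 + tau2 g N xs (X0 \<omega>) + 1)"
      using tau2_nonneg[of g N xs "X0 \<omega>"] by (intro mult_right_mono) auto
    ultimately show ?thesis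
      unfolding D_def by (meson abs_ge_zero mult_left_mono order_trans)
  qed
  then have "(\<integral>\<^sup>+\<omega>. ennreal (c * ((norm (X1 \<omega> - xs))\<^sup>2 + tau2 g N xs (X0 \<omega>) + 1)) \<partial>M)
      \<le> (\<integral>\<^sup>+\<omega>. ennreal (D \<omega>) \<partial>M)"
    by (intro nn_integral_mono ennreal_leI)
  also have "\<dots> < \<infinity>"
  proof -
    have "integrable M D" unfolding D_def using X0 X1 by simp
    from integrableD(2)[OF this] show ?thesis
      by (simp add: less_top[symmetric])
  qed
  finally show ?thesis .
qed

theorem theorem5:
  fixes M :: "'b measure"
    and f :: "nat \<Rightarrow> 'a::euclidean_space \<Rightarrow> real"
    and g :: "nat \<Rightarrow> 'a \<Rightarrow> 'a"
    and N :: nat and lam :: real and gam :: "nat \<Rightarrow> real"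
    and X0 X1 :: "'b \<Rightarrow> 'a" and U :: "nat \<Rightarrow> 'b \<Rightarrow> nat" and xs :: 'a
  assumes P: "prob_space M"
    and N: "N \<ge> 1"
    and lam: "0 \<le> lam" "lam \<le> 1"
    and grad: "\<And>k x. k \<in> {1..N} \<Longrightarrow> (f k has_derivative (\<lambda>h. g k x \<bullet> h)) (at x)"
    and gam_pos: "\<And>n. n \<ge> 1 \<Longrightarrow> gam n > 0"
    and gam_dec: "\<And>n. n \<ge> 1 \<Longrightarrow> gam (Suc n) \<le> gam n"
    and gam_lim: "gam \<longlonglongrightarrow> 0"
    and gam_div: "\<not> summable (\<lambda>n. gam (Suc n))"
    and gam_sq: "summable (\<lambda>n. (gam (Suc n))\<^sup>2)"
    and X0: "X0 \<in> borel_measurable M" "integrable M (\<lambda>\<omega>. (norm (X0 \<omega>))\<^sup>2)"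
    and X1: "X1 \<in> borel_measurable M" "integrable M (\<lambda>\<omega>. (norm (X1 \<omega>))\<^sup>2)"
    and U_meas: "\<And>n. n \<ge> 2 \<Longrightarrow> U n \<in> measurable M (count_space UNIV)"
    and U_unif: "\<And>n. n \<ge> 2 \<Longrightarrow>
        distr M (count_space UNIV) (U n) = measure_pmf (pmf_of_set {1..N})"
    and U_indep: "prob_space.indep_vars M (\<lambda>_. count_space UNIV) U {2..}"
    and U_X_indep: "prob_space.indep_set M
        (sets (vimage_algebra (space M) (\<lambda>\<omega>. (X0 \<omega>, X1 \<omega>)) borel))
        (sets (vimage_algebra (space M) (\<lambda>\<omega>. \<lambda>n\<in>{2::nat..}. U n \<omega>)
                (PiM {2..} (\<lambda>_. count_space (UNIV::nat set)))))"
    and A1_cont: "continuous_on UNIV (\<lambda>x. (1 / real N) *\<^sub>R (\<Sum>k=1..N. g k x))"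
    and A1_xs: "(1 / real N) *\<^sub>R (\<Sum>k=1..N. g k xs) = 0"
    and A1_uniq: "\<And>y. (1 / real N) *\<^sub>R (\<Sum>k=1..N. g k y) = 0 \<Longrightarrow> y = xs"
    and A3: "\<exists>L>0. \<forall>x. tau2 g N xs x \<le> L * (norm (x - xs))\<^sup>2"
    and A5: "\<exists>\<mu>>0. \<forall>x. (x - xs) \<bullet> ((1 / real N) *\<^sub>R (\<Sum>k=1..N. g k x)) \<ge> \<mu> * (norm (x - xs))\<^sup>2"
  shows "AE \<omega> in M.
      summable (\<lambda>n. gam (Suc n) * (norm (saga_X g N lam gam (X0 \<omega>) (X1 \<omega>) (\<lambda>m. U m \<omega>) (Suc n) - xs))\<^sup>2)
    \<and> summable (\<lambda>n. gam (Suc n) * saga_A g N xs (saga_phi g N lam gam (X0 \<omega>) (X1 \<omega>) (\<lambda>m. U m \<omega>) (Suc n)))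
    \<and> summable (\<lambda>n. gam (Suc n) * tau2 g N xs (saga_X g N lam gam (X0 \<omega>) (X1 \<omega>) (\<lambda>m. U m \<omega>) (Suc n)))
    \<and> (\<Sum>n. ennreal (gam (Suc n)) * (\<integral>\<^sup>+ \<omega>. ennreal ((norm (saga_X g N lam gam (X0 \<omega>) (X1 \<omega>) (\<lambda>m. U m \<omega>) (Suc n) - xs))\<^sup>2) \<partial>M)) < \<infinity>
    \<and> (\<Sum>n. ennreal (gam (Suc n)) * (\<integral>\<^sup>+ \<omega>. ennreal (saga_A g N xs (saga_phi g N lam gam (X0 \<omega>) (X1 \<omega>) (\<lambda>m. U m \<omega>) (Suc n))) \<partial>M)) < \<infinity>
    \<and> (\<Sum>n. ennreal (gam (Suc n)) * (\<integral>\<^sup>+ \<omega>. ennreal (tau2 g N xs (saga_X g N lam gam (X0 \<omega>) (X1 \<omega>) (\<lambda>m. U m \<omega>) (Suc n))) \<partial>M)) < \<infinity>"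
proof -
  interpret uniform_sampling M N X0 X1 U
    using P N X0(1) X1(1) U_meas U_unif U_indep U_X_indep
    by (simp add: uniform_sampling_def uniform_sampling_axioms_def)
  obtain L where L: "L > 0" "\<And>x. tau2 g N xs x \<le> L * (norm (x - xs))\<^sup>2" using A3 by blast
  obtain \<mu> where \<mu>: "\<mu> > 0" "\<And>x. (x - xs) \<bullet> ((1 / real N) *\<^sub>R (\<Sum>k=1..N. g k x)) \<ge> \<mu> * (norm (x - xs))\<^sup>2"
    using A5 by blast
  have g_meas: "\<And>k. k \<in> {1..N} \<Longrightarrow> g k \<in> borel_measurable borel"
    using grad gradient_borel_measurable by blast
  have gam_nonneg: "\<And>n. gam (Suc n) \<ge> 0" using gam_pos by (simp add: less_imp_le)
  have gam_decr: "\<And>n. gam (Suc (Suc n)) \<le> gam (Suc n)" using gam_dec by simp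
  have xs: "(\<Sum>k=1..N. g k xs) = 0" using A1_xs N by simp
  obtain K where K:
    "\<And>x0 x1 m. (\<Sum>n<m. gam (Suc n) * saga_mean g N lam gam (\<lambda>p. (norm (fst p - xs))\<^sup>2) x0 x1 n)
       \<le> K * ((norm (x1 - xs))\<^sup>2 + tau2 g N xs x0 + 1)"
    "\<And>x0 x1 m. (\<Sum>n<m. gam (Suc n) * saga_mean g N lam gam (\<lambda>p. saga_A g N xs (snd p)) x0 x1 n)
       \<le> K * ((norm (x1 - xs))\<^sup>2 + tau2 g N xs x0 + 1)"
    "\<And>x0 x1 m. (\<Sum>n<m. gam (Suc n) * saga_mean g N lam gam (\<lambda>p. tau2 g N xs (fst p)) x0 x1 n)
       \<le> L * K * ((norm (x1 - xs))\<^sup>2 + tau2 g N xs x0 + 1)"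
    using saga_mean_weighted_sums_bounded[OF N lam gam_nonneg gam_decr gam_lim gam_sq xs L \<mu>] by blast
  have fin: "(\<integral>\<^sup>+\<omega>. ennreal (c * ((norm (X1 \<omega> - xs))\<^sup>2 + tau2 g N xs (X0 \<omega>) + 1)) \<partial>M) < \<infinity>" for c
    using nn_integral_initial_bound_finite[OF X0(2) X1(2) _ L(2)] L(1) by simp
  note Q_meas = saga_quantities_measurable[OF g_meas]
  note V = saga_weighted_sums_finite[OF zero_le_power2 Q_meas(1) gam_nonneg K(1) fin]
  note A = saga_weighted_sums_finite[OF saga_A_nonneg Q_meas(2) gam_nonneg K(2) fin]
  note T = saga_weighted_sums_finite[OF tau2_nonneg Q_meas(3) gam_nonneg K(3) fin]
  show ?thesis
    using V A T by (simp add: saga_X_def saga_phi_def eventually_conj_iff)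
qed

end
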